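(* Let $\mathcal{H}$ be a complex Hilbert space of finite dimension $n\ge2$, $m\ge2$, and let $\mathcal{G}=(\{1,\dots,m\},E)$ be a connected undirected graph. Fix $\alpha\in(0,1)$. The quantum gossip algorithm evolves a density operator on $\mathcal{H}^{\otimes m}$ by, at each time $t$, selecting an edge $(j,k)\in E$ and applying $$\rho(t+1)=\mathcal{E}_{j,k}(\rho(t))=(1-\alpha)\rho(t)+\alpha\,U_{(j,k)}\rho(t)U_{(j,k)}^\dagger .$$ Let $\rho_0=\rho(0)$ and $\rho_*=\frac{1}{m!}\sum_{\pi}U_\pi\rho_0U_\pi^\dagger$ (sum over all permutations of $\{1,\dots,m\}$). Then: (i) if the edges are selected deterministically by periodically cycling, in any predefined way, through the set of edges (each period containing every edge), then $\rho(t)\to\rho_*$, and the system converges to symmetric state consensus (SSC) for every initial state; (ii) if at each time the edge is selected independently at random according to a fixed distribution $\{q_{j,k}>0\}$ with $\sum_{(j,k)\in E}q_{j,k}=1$, then the expected state, which evolves as $\rho(t+1)=\sum_{(j,k)\in E}q_{j,k}\mathcal{E}_{j,k}(\rho(t))$, converges to $\rho_*$, hence to SSC; (iii) with the same random edge selection, convergence holds with probability one along trajectories in the sense that for any $\delta,\varepsilon>0$ there exists $T>0$ such that $\mathbb{P}[\mathrm{Tr}((\rho(T)-\rho_* )^2)>\varepsilon]<\delta$, where $\rho_*\in\mathcal{C}_{\rm SSC}$. Furthermore, for these evolutions, $S$-average SSC is attained for a self-adjoint $S$ on $\mathcal{H}^{\otimes m}$ if and only if there exists a self-adjoint $\sigma$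 on $\mathcal{H}$ with $S=\frac1m\sum_{i=1}^m\sigma^{(i)}$.
   Context: For $X$ an operator on $\mathcal{H}$, $X^{(i)}=I^{\otimes(i-1)}\otimes X\otimes I^{\otimes(m-i)}$. For a permutation $\pi$ of $\{1,\dots,m\}$, $U_\pi$ is the unitary on $\mathcal{H}^{\otimes m}$ with $U_\pi(X_1\otimes\cdots\otimes X_m)U_\pi^\dagger=X_{\pi(1)}\otimes\cdots\otimes X_{\pi(m)}$; $U_{(j,k)}$ is $U_\pi$ for the transposition of $j,k$. A density operator $\rho$ is in symmetric state consensus (SSC) if $U_\pi\rho U_\pi^\dagger=\rho$ for all $\pi$; $\mathcal{C}_{\rm SSC}$ is the set of such states. A sequence of channels with $\rho(t)=\hat{\mathcal{E}}_t(\rho_0)$ asymptotically achieves SSC if $\lim_t \inf_{\rho\in\mathcal{C}_{\rm SSC}}\|\rho(t)-\rho\|=0$ for all initial states $\rho_0$ (any $p$-norm). It asymptotically achieves $S$-average SSC, for self-adjoint $S$ on $\mathcal{H}^{\otimes m}$, if it asymptotically achieves SSC and there exists a self-adjoint $\sigma$ on $\mathcal{H}$ such that for all initial states $\rho_0$ and all $\ell\in\{1,\dots,m\}$: $\lim_t\mathrm{Tr}(\sigma^{(\ell)}\rho(t))=\lim_t\mathrm{Tr}(S\rho(t))=\mathrm{Tr}(S\rho_0)$. *)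

theory Defs
  imports "HOL-Probability.Probability" "HOL-Probability.Product_PMF"
    "HOL-Combinatorics.Permutations" "HOL-Combinatorics.Transposition"
    "HOL-Library.FuncSet"
begin

text \<open>Coordinates: H = C^n with orthonormal basis indexed by {0..<n}; H^(tensor m) has
  orthonormal basis indexed by tuples a in {0..<m} ->E {0..<n} (site l carries basis index a l).
  Sites are 0-based: {0..<m}.  Operators on H^(tensor m) are represented by their matrix
  entries A a b (a,b tuples), required to vanish outside the index set.\<close>

type_synonym idx = "nat \<Rightarrow> nat"
type_synonym op = "idx \<Rightarrow> idx \<Rightarrow> complex"

definition Idx :: "nat \<Rightarrow> nat \<Rightarrow> idx set" where
  "Idx n m = ({0..<m} \<rightarrow>\<^sub>E {0..<n})"

definition supported :: "nat \<Rightarrow> nat \<Rightarrow> op \<Rightarrow> bool" where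
  "supported n m A \<longleftrightarrow> (\<forall>a b. (a \<notin> Idx n m \<or> b \<notin> Idx n m) \<longrightarrow> A a b = 0)"

definition self_adjoint :: "nat \<Rightarrow> nat \<Rightarrow> op \<Rightarrow> bool" where
  "self_adjoint n m A \<longleftrightarrow> supported n m A \<and> (\<forall>a b. A b a = cnj (A a b))"

definition op_trace :: "nat \<Rightarrow> nat \<Rightarrow> op \<Rightarrow> complex" where
  "op_trace n m A = (\<Sum>a\<in>Idx n m. A a a)"

definition op_mult :: "nat \<Rightarrow> nat \<Rightarrow> op \<Rightarrow> op \<Rightarrow> op" where
  "op_mult n m A B = (\<lambda>a b. if a \<in> Idx n m \<and> b \<in> Idx n m
      then (\<Sum>c\<in>Idx n m. A a c * B c b) else 0)"

definition density_op :: "nat \<Rightarrow> nat \<Rightarrow> op \<Rightarrow> bool" where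
  "density_op n m \<rho> \<longleftrightarrow> self_adjoint n m \<rho> \<and>
     (\<forall>v :: idx \<Rightarrow> complex. let q = (\<Sum>a\<in>Idx n m. \<Sum>b\<in>Idx n m. cnj (v a) * \<rho> a b * v b)
        in Im q = 0 \<and> Re q \<ge> 0) \<and>
     op_trace n m \<rho> = 1"

definition hs_norm :: "nat \<Rightarrow> nat \<Rightarrow> op \<Rightarrow> real" where
  "hs_norm n m A = sqrt (\<Sum>a\<in>Idx n m. \<Sum>b\<in>Idx n m. (cmod (A a b))\<^sup>2)"

text \<open>U_pi A U_pi^dagger, where U_pi (X_1 x ... x X_m) U_pi^dagger = X_(pi 1) x ... x X_(pi m).\<close>
definition permute_op :: "(nat \<Rightarrow> nat) \<Rightarrow> op \<Rightarrow> op" where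
  "permute_op \<pi> A = (\<lambda>a b. A (a \<circ> inv \<pi>) (b \<circ> inv \<pi>))"

definition SSC :: "nat \<Rightarrow> nat \<Rightarrow> op set" where
  "SSC n m = {\<rho>. density_op n m \<rho> \<and> (\<forall>\<pi>. \<pi> permutes {0..<m} \<longrightarrow> permute_op \<pi> \<rho> = \<rho>)}"

definition sym_avg :: "nat \<Rightarrow> op \<Rightarrow> op" where
  "sym_avg m \<rho> = (\<lambda>a b. (\<Sum>\<pi>\<in>{\<pi>. \<pi> permutes {0..<m}}. permute_op \<pi> \<rho> a b) / of_nat (fact m))"

definition local_op :: "nat \<Rightarrow> nat \<Rightarrow> nat \<Rightarrow> (nat \<Rightarrow> nat \<Rightarrow> complex) \<Rightarrow> op" where
  "local_op n m i \<sigma> = (\<lambda>a b. if a \<in> Idx n m \<and> b \<in> Idx n m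
      then \<sigma> (a i) (b i) * (\<Prod>l\<in>{0..<m} - {i}. if a l = b l then 1 else 0) else 0)"

definition hermitian1 :: "nat \<Rightarrow> (nat \<Rightarrow> nat \<Rightarrow> complex) \<Rightarrow> bool" where
  "hermitian1 n \<sigma> \<longleftrightarrow> (\<forall>x<n. \<forall>y<n. \<sigma> y x = cnj (\<sigma> x y))"

text \<open>Connected undirected graph on vertices {0..<m}; an undirected edge is represented by
  (at least) one of its orientations (j,k).\<close>
definition connected_graph :: "nat \<Rightarrow> (nat \<times> nat) set \<Rightarrow> bool" where
  "connected_graph m E \<longleftrightarrow> E \<subseteq> {(j,k). j < m \<and> k < m \<and> j \<noteq> k} \<and>
     (\<forall>u<m. \<forall>v<m. (u,v) \<in> (E \<union> E\<inverse>)\<^sup>*)"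

definition gossip :: "real \<Rightarrow> nat \<times> nat \<Rightarrow> op \<Rightarrow> op" where
  "gossip \<alpha> e \<rho> = (\<lambda>a b. complex_of_real (1 - \<alpha>) * \<rho> a b
      + complex_of_real \<alpha> * permute_op (Transposition.transpose (fst e) (snd e)) \<rho> a b)"

primrec traj :: "real \<Rightarrow> (nat \<Rightarrow> nat \<times> nat) \<Rightarrow> op \<Rightarrow> nat \<Rightarrow> op" where
  "traj \<alpha> es \<rho>0 0 = \<rho>0"
| "traj \<alpha> es \<rho>0 (Suc t) = gossip \<alpha> (es t) (traj \<alpha> es \<rho>0 t)"

primrec exp_traj :: "real \<Rightarrow> (nat \<times> nat) pmf \<Rightarrow> (nat \<times> nat) set \<Rightarrow> op \<Rightarrow> nat \<Rightarrow> op" where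
  "exp_traj \<alpha> Q E \<rho>0 0 = \<rho>0"
| "exp_traj \<alpha> Q E \<rho>0 (Suc t) =
     (\<lambda>a b. \<Sum>e\<in>E. complex_of_real (pmf Q e) * gossip \<alpha> e (exp_traj \<alpha> Q E \<rho>0 t) a b)"

definition periodic_schedule :: "(nat \<times> nat) set \<Rightarrow> (nat \<Rightarrow> nat \<times> nat) \<Rightarrow> bool" where
  "periodic_schedule E es \<longleftrightarrow> (\<forall>t. es t \<in> E) \<and>
     (\<exists>P>0. (\<forall>t. es (t + P) = es t) \<and> E \<subseteq> es ` {..<P})"

definition converges_to :: "nat \<Rightarrow> nat \<Rightarrow> (nat \<Rightarrow> op) \<Rightarrow> op \<Rightarrow> bool" where
  "converges_to n m \<rho> \<sigma> \<longleftrightarrow> (\<lambda>t. hs_norm n m (\<lambda>a b. \<rho> t a b - \<sigma> a b)) \<longlonglongrightarrow> 0"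

text \<open>A sequence of channels is given as the map rho0 |-> trajectory.\<close>
definition achieves_SSC :: "nat \<Rightarrow> nat \<Rightarrow> (op \<Rightarrow> nat \<Rightarrow> op) \<Rightarrow> bool" where
  "achieves_SSC n m F \<longleftrightarrow> (\<forall>\<rho>0. density_op n m \<rho>0 \<longrightarrow>
     (\<lambda>t. INF \<sigma>\<in>SSC n m. hs_norm n m (\<lambda>a b. F \<rho>0 t a b - \<sigma> a b)) \<longlonglongrightarrow> 0)"

definition achieves_S_avg_SSC :: "nat \<Rightarrow> nat \<Rightarrow> (op \<Rightarrow> nat \<Rightarrow> op) \<Rightarrow> op \<Rightarrow> bool" where
  "achieves_S_avg_SSC n m F S \<longleftrightarrow> achieves_SSC n m F \<and>
     (\<exists>\<sigma>. hermitian1 n \<sigma> \<and> (\<forall>\<rho>0. density_op n m \<rho>0 \<longrightarrow> (\<forall>l<m.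
        (\<lambda>t. op_trace n m (op_mult n m (local_op n m l \<sigma>) (F \<rho>0 t)))
            \<longlonglongrightarrow> op_trace n m (op_mult n m S \<rho>0) \<and>
        (\<lambda>t. op_trace n m (op_mult n m S (F \<rho>0 t)))
            \<longlonglongrightarrow> op_trace n m (op_mult n m S \<rho>0))))"

definition is_local_average :: "nat \<Rightarrow> nat \<Rightarrow> op \<Rightarrow> bool" where
  "is_local_average n m S \<longleftrightarrow> (\<exists>\<sigma>. hermitian1 n \<sigma> \<and>
     S = (\<lambda>a b. (\<Sum>i<m. local_op n m i \<sigma> a b) / of_nat m))"

end

(*
  The gossip channels commute with the symmetrization rho |-> rho_*, so rho_* is conserved and the
  deviation X(t) = rho(t) - rho_* has vanishing symmetrization.  A gossip step along an edge e
  lowers the squared Hilbert-Schmidt norm of X by alpha (1 - alpha) |X - U_e X U_e^dagger|^2.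
  An operator with vanishing symmetrization is the average of its defects X - U_pi X U_pi^dagger,
  and along a connected graph every permutation is a product of edge transpositions; this gives a
  Poincare inequality |X|^2 <= K sum_e |X - U_e X U_e^dagger|^2.  Hence |X|^2 decays geometrically:
  over every period of a periodic schedule, at every step for the expected state, and in
  expectation for random trajectories, where Markov's inequality gives the probabilistic claim.

  Permutation-invariant observables are conserved by the dynamics, and the limit rho_* only sees
  the permutation-invariant part of an observable.  As pure states separate operators, requiring
  Tr(sigma^(l) rho(t)) to converge to Tr(S rho_0) for all initial states forces
  S = (1/m) sum_i sigma^(i).
*)
theory Submission
  imports Defs
begin

section \<open>Site permutations and symmetrization\<close>

lemma finite_Idx [simp]: "finite (Idx n m)"
  unfolding Idx_def by (simp add: finite_PiE)

lemma comp_permutes_in_Idx: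
  assumes "\<pi> permutes {0..<m}" "a \<in> Idx n m"
  shows "a \<circ> \<pi> \<in> Idx n m"
  using assms(2) permutes_in_image[OF assms(1)] permutes_not_in[OF assms(1)]
  unfolding Idx_def by (auto simp: PiE_iff extensional_def)

lemma Idx_comp_permutes_iff:
  assumes "\<pi> permutes {0..<m}"
  shows "a \<circ> \<pi> \<in> Idx n m \<longleftrightarrow> a \<in> Idx n m"
proof
  assume "a \<circ> \<pi> \<in> Idx n m"
  from comp_permutes_in_Idx[OF permutes_inv[OF assms] this] show "a \<in> Idx n m"
    by (simp add: o_assoc[symmetric] permutes_inv_o(1)[OF assms])
qed (rule comp_permutes_in_Idx[OF assms])

lemma sum_Idx_comp_permutes:
  assumes "\<pi> permutes {0..<m}"
  shows "(\<Sum>a\<in>Idx n m. f (a \<circ> \<pi>)) = (\<Sum>a\<in>Idx n m. f a)"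
proof -
  have "bij_betw (\<lambda>a. a \<circ> \<pi>) (Idx n m) (Idx n m)"
    by (rule bij_betw_byWitness[where f'="\<lambda>a. a \<circ> inv \<pi>"])
       (auto simp: o_assoc[symmetric] permutes_inv_o[OF assms] Idx_comp_permutes_iff[OF assms]
          Idx_comp_permutes_iff[OF permutes_inv[OF assms]])
  from sum.reindex_bij_betw[OF this] show ?thesis .
qed

definition op_diff :: "op \<Rightarrow> op \<Rightarrow> op" where
  "op_diff X Y = (\<lambda>a b. X a b - Y a b)"

definition hs_norm_sq :: "nat \<Rightarrow> nat \<Rightarrow> op \<Rightarrow> real" where
  "hs_norm_sq n m X = (\<Sum>a\<in>Idx n m. \<Sum>b\<in>Idx n m. (cmod (X a b))\<^sup>2)"

abbreviation edge_transp :: "nat \<times> nat \<Rightarrow> nat \<Rightarrow> nat" where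
  "edge_transp e \<equiv> Transposition.transpose (fst e) (snd e)"

abbreviation site_perms :: "nat \<Rightarrow> (nat \<Rightarrow> nat) set" where
  "site_perms m \<equiv> {\<pi>. \<pi> permutes {0..<m}}"

lemma finite_site_perms [simp]: "finite (site_perms m)"
  by (rule finite_permutations) simp

lemma card_site_perms [simp]: "card (site_perms m) = fact m"
  by (rule card_permutations) auto

lemma hs_norm_sq_nonneg: "0 \<le> hs_norm_sq n m X"
  unfolding hs_norm_sq_def by (intro sum_nonneg) auto

lemma hs_norm_eq_sqrt: "hs_norm n m X = sqrt (hs_norm_sq n m X)"
  unfolding hs_norm_def hs_norm_sq_def ..

lemma hs_norm_sq_diff_commute: "hs_norm_sq n m (op_diff X Y) = hs_norm_sq n m (op_diff Y X)"
  unfolding hs_norm_sq_def op_diff_def by (simp add: norm_minus_commute)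

lemma hs_norm_sq_scale: "hs_norm_sq n m (\<lambda>a b. c * X a b) = (cmod c)\<^sup>2 * hs_norm_sq n m X"
  unfolding hs_norm_sq_def by (simp add: norm_mult power_mult_distrib sum_distrib_left)

lemma permute_op_id [simp]: "permute_op id A = A"
  unfolding permute_op_def by simp

lemma permute_op_comp:
  assumes "\<pi> permutes S" "\<sigma> permutes S"
  shows "permute_op \<pi> (permute_op \<sigma> A) = permute_op (\<sigma> \<circ> \<pi>) A"
  using o_inv_distrib[OF permutes_bij[OF assms(2)] permutes_bij[OF assms(1)]]
  unfolding permute_op_def by (simp add: o_assoc)

lemma permute_op_diff: "permute_op \<pi> (op_diff A B) = op_diff (permute_op \<pi> A) (permute_op \<pi> B)"
  unfolding permute_op_def op_diff_def ..

lemma hs_norm_sq_permute_op: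
  assumes "\<pi> permutes {0..<m}"
  shows "hs_norm_sq n m (permute_op \<pi> X) = hs_norm_sq n m X"
proof -
  note reindex = sum_Idx_comp_permutes[OF permutes_inv[OF assms]]
  have "hs_norm_sq n m (permute_op \<pi> X)
      = (\<Sum>a\<in>Idx n m. \<Sum>b\<in>Idx n m. (cmod (X (a \<circ> inv \<pi>) (b \<circ> inv \<pi>)))\<^sup>2)"
    unfolding hs_norm_sq_def permute_op_def ..
  also have "\<dots> = (\<Sum>a\<in>Idx n m. \<Sum>b\<in>Idx n m. (cmod (X (a \<circ> inv \<pi>) b))\<^sup>2)"
    by (intro sum.cong refl reindex)
  also have "\<dots> = hs_norm_sq n m X"
    unfolding hs_norm_sq_def by (rule reindex)
  finally show ?thesis .
qed

lemma edge_transp_permutes: "fst e < m \<Longrightarrow> snd e < m \<Longrightarrow> edge_transp e permutes {0..<m}"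
  by (rule permutes_swap_id) auto

lemma sym_avg_apply:
  "sym_avg m X a b = (\<Sum>\<pi>\<in>site_perms m. X (a \<circ> inv \<pi>) (b \<circ> inv \<pi>)) / of_nat (fact m)"
  unfolding sym_avg_def permute_op_def ..

lemma sym_avg_eq_convex_comb:
  "sym_avg m X = (\<lambda>a b. \<Sum>\<pi>\<in>site_perms m. complex_of_real (1 / fact m) * permute_op \<pi> X a b)"
  unfolding sym_avg_def by (simp add: sum_divide_distrib of_real_divide)

lemma sum_site_perms_comp_right:
  assumes "\<sigma> permutes {0..<m}"
  shows "(\<Sum>\<pi>\<in>site_perms m. f (\<pi> \<circ> \<sigma>)) = (\<Sum>\<pi>\<in>site_perms m. f \<pi>)"
proof -
  have "bij_betw (\<lambda>\<pi>. \<pi> \<circ> \<sigma>) (site_perms m) (site_perms m)"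
    by (rule bij_betw_byWitness[where f'="\<lambda>\<pi>. \<pi> \<circ> inv \<sigma>"])
       (use assms in \<open>auto simp: o_assoc[symmetric] permutes_inv_o permutes_compose permutes_inv\<close>)
  from sum.reindex_bij_betw[OF this] show ?thesis .
qed

lemma sum_site_perms_comp_left:
  assumes "\<sigma> permutes {0..<m}"
  shows "(\<Sum>\<pi>\<in>site_perms m. f (\<sigma> \<circ> \<pi>)) = (\<Sum>\<pi>\<in>site_perms m. f \<pi>)"
proof -
  have "bij_betw (\<lambda>\<pi>. \<sigma> \<circ> \<pi>) (site_perms m) (site_perms m)"
    by (rule bij_betw_byWitness[where f'="\<lambda>\<pi>. inv \<sigma> \<circ> \<pi>"])
       (use assms in \<open>auto simp: o_assoc permutes_inv_o permutes_compose permutes_inv\<close>)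
  from sum.reindex_bij_betw[OF this] show ?thesis .
qed

lemma permute_op_sym_avg:
  assumes "\<sigma> permutes {0..<m}"
  shows "permute_op \<sigma> (sym_avg m X) = sym_avg m X"
proof -
  have "(\<Sum>\<pi>\<in>site_perms m. permute_op \<sigma> (permute_op \<pi> X) a b)
      = (\<Sum>\<pi>\<in>site_perms m. permute_op \<pi> X a b)" for a b
    using permute_op_comp[OF assms] sum_site_perms_comp_right[OF assms, of "\<lambda>\<pi>. permute_op \<pi> X a b"]
    by simp
  then show ?thesis
    unfolding sym_avg_def by (simp add: permute_op_def)
qed

lemma sym_avg_permute_op:
  assumes "\<sigma> permutes {0..<m}"
  shows "sym_avg m (permute_op \<sigma> X) = sym_avg m X"
proof -
  have "(\<Sum>\<pi>\<in>site_perms m. permute_op \<pi> (permute_op \<sigma> X) a b)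
      = (\<Sum>\<pi>\<in>site_perms m. permute_op \<pi> X a b)" for a b
    using permute_op_comp[OF _ assms] sum_site_perms_comp_left[OF assms, of "\<lambda>\<pi>. permute_op \<pi> X a b"]
    by simp
  then show ?thesis
    unfolding sym_avg_def by simp
qed

lemma sym_avg_idem: "sym_avg m (sym_avg m X) = sym_avg m X"
  unfolding sym_avg_def[of m "sym_avg m X"]
  by (simp add: permute_op_sym_avg)

lemma sym_avg_sum:
  "sym_avg m (\<lambda>a b. \<Sum>e\<in>A. c e * Y e a b) = (\<lambda>a b. \<Sum>e\<in>A. c e * sym_avg m (Y e) a b)"
  unfolding sym_avg_apply
  by (simp add: sum_distrib_left sum_divide_distrib sum.swap[of _ A] mult.commute)

lemma sym_avg_diff: "sym_avg m (op_diff X Y) = op_diff (sym_avg m X) (sym_avg m Y)"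
  unfolding sym_avg_apply op_diff_def by (simp add: sum_subtractf diff_divide_distrib)

lemma sym_avg_diff_sym_avg:
  assumes "sym_avg m Z = sym_avg m \<rho>"
  shows "sym_avg m (op_diff Z (sym_avg m \<rho>)) = (\<lambda>a b. 0)"
  unfolding sym_avg_diff assms sym_avg_idem by (simp add: op_diff_def)

lemma sym_avg_gossip:
  assumes "fst e < m" "snd e < m"
  shows "sym_avg m (gossip \<alpha> e X) = sym_avg m X"
proof -
  have "sym_avg m (gossip \<alpha> e X) = (\<lambda>a b. complex_of_real (1 - \<alpha>) * sym_avg m X a b
      + complex_of_real \<alpha> * sym_avg m (permute_op (edge_transp e) X) a b)"
    unfolding gossip_def sym_avg_apply by (simp add: sum.distrib sum_distrib_left add_divide_distrib)
  also have "\<dots> = sym_avg m X"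
    using sym_avg_permute_op[OF edge_transp_permutes[OF assms]]
    by (simp add: algebra_simps flip: of_real_add)
  finally show ?thesis .
qed

lemma gossip_op_diff_fixed:
  assumes "permute_op (edge_transp e) Y = Y"
  shows "gossip \<alpha> e (op_diff X Y) = op_diff (gossip \<alpha> e X) Y"
proof (intro ext)
  fix a b
  have swapped: "permute_op (edge_transp e) (op_diff X Y) a b = permute_op (edge_transp e) X a b - Y a b"
    using assms unfolding permute_op_diff by (simp add: op_diff_def)
  show "gossip \<alpha> e (op_diff X Y) a b = op_diff (gossip \<alpha> e X) Y a b"
    unfolding gossip_def swapped by (simp add: op_diff_def algebra_simps of_real_diff)
qed

section \<open>Estimates for the Hilbert--Schmidt norm\<close>

lemma cmod_interpolate_sq:
  fixes x y :: complex and \<alpha> :: real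
  shows "(cmod (complex_of_real (1 - \<alpha>) * x + complex_of_real \<alpha> * y))\<^sup>2 =
     (1 - \<alpha>) * (cmod x)\<^sup>2 + \<alpha> * (cmod y)\<^sup>2 - \<alpha> * (1 - \<alpha>) * (cmod (x - y))\<^sup>2"
  by (simp only: cmod_power2) (simp add: power2_eq_square algebra_simps)

lemma cmod_add_sq_le: "(cmod (x + y))\<^sup>2 \<le> 2 * (cmod x)\<^sup>2 + 2 * (cmod y)\<^sup>2"
proof -
  have "(cmod (x + y))\<^sup>2 \<le> (cmod x + cmod y)\<^sup>2"
    by (intro power_mono norm_triangle_ineq) auto
  also have "\<dots> \<le> 2 * (cmod x)\<^sup>2 + 2 * (cmod y)\<^sup>2"
    using zero_le_power2[of "cmod x - cmod y"] by (simp add: power2_eq_square algebra_simps)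
  finally show ?thesis .
qed

lemma hs_norm_sq_add_le:
  "hs_norm_sq n m (\<lambda>a b. X a b + Y a b) \<le> 2 * hs_norm_sq n m X + 2 * hs_norm_sq n m Y"
  unfolding hs_norm_sq_def
  by (simp add: sum_distrib_left flip: sum.distrib) (intro sum_mono cmod_add_sq_le)

lemma hs_norm_sq_add3_le:
  "hs_norm_sq n m (\<lambda>a b. X a b + Y a b + W a b)
     \<le> 2 * hs_norm_sq n m X + 4 * hs_norm_sq n m Y + 4 * hs_norm_sq n m W"
  using hs_norm_sq_add_le[of n m X "\<lambda>a b. Y a b + W a b"] hs_norm_sq_add_le[of n m Y W]
  by (simp add: add.assoc)

lemma weighted_mean_sq_le:
  fixes q x :: "'i \<Rightarrow> real"
  assumes "\<And>i. i \<in> A \<Longrightarrow> q i \<ge> 0" "(\<Sum>i\<in>A. q i) = 1"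
  shows "(\<Sum>i\<in>A. q i * x i)\<^sup>2 \<le> (\<Sum>i\<in>A. q i * (x i)\<^sup>2)"
proof -
  define \<mu> where "\<mu> = (\<Sum>i\<in>A. q i * x i)"
  have "0 \<le> (\<Sum>i\<in>A. q i * (x i - \<mu>)\<^sup>2)"
    using assms(1) by (intro sum_nonneg) auto
  also have "\<dots> = (\<Sum>i\<in>A. q i * (x i)\<^sup>2) - 2 * \<mu> * (\<Sum>i\<in>A. q i * x i) + \<mu>\<^sup>2 * (\<Sum>i\<in>A. q i)"
    by (simp add: power2_eq_square algebra_simps sum.distrib sum_subtractf sum_distrib_left)
  finally show ?thesis using assms(2) unfolding \<mu>_def by (simp add: power2_eq_square)
qed

lemma cmod_convex_comb_sq_le:
  fixes q :: "'i \<Rightarrow> real" and z :: "'i \<Rightarrow> complex"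
  assumes "\<And>i. i \<in> A \<Longrightarrow> q i \<ge> 0" "(\<Sum>i\<in>A. q i) = 1"
  shows "(cmod (\<Sum>i\<in>A. complex_of_real (q i) * z i))\<^sup>2 \<le> (\<Sum>i\<in>A. q i * (cmod (z i))\<^sup>2)"
proof -
  have "cmod (\<Sum>i\<in>A. complex_of_real (q i) * z i) \<le> (\<Sum>i\<in>A. cmod (complex_of_real (q i) * z i))"
    by (rule norm_sum)
  also have "\<dots> = (\<Sum>i\<in>A. q i * cmod (z i))"
    using assms(1) by (intro sum.cong) (auto simp: norm_mult)
  finally have "(cmod (\<Sum>i\<in>A. complex_of_real (q i) * z i))\<^sup>2 \<le> (\<Sum>i\<in>A. q i * cmod (z i))\<^sup>2"
    by (intro power_mono) auto
  also have "\<dots> \<le> (\<Sum>i\<in>A. q i * (cmod (z i))\<^sup>2)"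
    by (rule weighted_mean_sq_le[OF assms])
  finally show ?thesis .
qed

lemma hs_norm_sq_convex_comb_le:
  fixes q :: "'i \<Rightarrow> real"
  assumes "\<And>i. i \<in> A \<Longrightarrow> q i \<ge> 0" "(\<Sum>i\<in>A. q i) = 1"
  shows "hs_norm_sq n m (\<lambda>a b. \<Sum>i\<in>A. complex_of_real (q i) * Z i a b)
           \<le> (\<Sum>i\<in>A. q i * hs_norm_sq n m (Z i))"
proof -
  have "hs_norm_sq n m (\<lambda>a b. \<Sum>i\<in>A. complex_of_real (q i) * Z i a b)
      \<le> (\<Sum>a\<in>Idx n m. \<Sum>b\<in>Idx n m. \<Sum>i\<in>A. q i * (cmod (Z i a b))\<^sup>2)"
    unfolding hs_norm_sq_def by (intro sum_mono cmod_convex_comb_sq_le[OF assms])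
  also have "\<dots> = (\<Sum>i\<in>A. q i * hs_norm_sq n m (Z i))"
    unfolding hs_norm_sq_def by (simp add: sum_distrib_left sum.swap[of _ A])
  finally show ?thesis .
qed

lemma hs_norm_sq_sum_le:
  assumes "finite A"
  shows "hs_norm_sq n m (\<lambda>a b. \<Sum>i\<in>A. Z i a b) \<le> card A * (\<Sum>i\<in>A. hs_norm_sq n m (Z i))"
proof (cases "A = {}")
  case False
  define c where "c = real (card A)"
  have c: "c > 0" using False assms unfolding c_def by (simp add: card_gt_0_iff)
  have "hs_norm_sq n m (\<lambda>a b. \<Sum>i\<in>A. Z i a b)
      = hs_norm_sq n m (\<lambda>a b. \<Sum>i\<in>A. complex_of_real (1 / c) * (complex_of_real c * Z i a b))"
    using c by simp
  also have "\<dots> \<le> (\<Sum>i\<in>A. (1 / c) * hs_norm_sq n m (\<lambda>a b. complex_of_real c * Z i a b))"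
    by (rule hs_norm_sq_convex_comb_le) (use c in \<open>auto simp: c_def\<close>)
  also have "\<dots> = (\<Sum>i\<in>A. c * hs_norm_sq n m (Z i))"
    unfolding hs_norm_sq_scale using c by (simp add: power2_eq_square)
  finally show ?thesis unfolding c_def by (simp add: sum_distrib_left)
qed (simp add: hs_norm_sq_def)

section \<open>Dissipation and a Poincare inequality\<close>

definition perm_defect :: "nat \<Rightarrow> nat \<Rightarrow> (nat \<Rightarrow> nat) \<Rightarrow> op \<Rightarrow> real" where
  "perm_defect n m \<pi> X = hs_norm_sq n m (op_diff X (permute_op \<pi> X))"

definition dirichlet_form :: "nat \<Rightarrow> nat \<Rightarrow> (nat \<times> nat) set \<Rightarrow> op \<Rightarrow> real" where
  "dirichlet_form n m E X = (\<Sum>e\<in>E. perm_defect n m (edge_transp e) X)"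

lemma perm_defect_nonneg: "0 \<le> perm_defect n m \<pi> X"
  unfolding perm_defect_def by (rule hs_norm_sq_nonneg)

lemma perm_defect_id [simp]: "perm_defect n m id X = 0"
  unfolding perm_defect_def hs_norm_sq_def op_diff_def by simp

lemma dirichlet_form_nonneg: "0 \<le> dirichlet_form n m E X"
  unfolding dirichlet_form_def by (intro sum_nonneg perm_defect_nonneg)

lemma hs_norm_sq_gossip:
  assumes "fst e < m" "snd e < m"
  shows "hs_norm_sq n m (gossip \<alpha> e X)
           = hs_norm_sq n m X - \<alpha> * (1 - \<alpha>) * perm_defect n m (edge_transp e) X"
proof -
  have "hs_norm_sq n m (gossip \<alpha> e X) = (1 - \<alpha>) * hs_norm_sq n m X
      + \<alpha> * hs_norm_sq n m (permute_op (edge_transp e) X) - \<alpha> * (1 - \<alpha>) * perm_defect n m (edge_transp e) X"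
    unfolding hs_norm_sq_def perm_defect_def gossip_def op_diff_def cmod_interpolate_sq
    by (simp add: sum_subtractf sum.distrib sum_distrib_left)
  then show ?thesis
    using hs_norm_sq_permute_op[OF edge_transp_permutes[OF assms]] by (simp add: algebra_simps)
qed

definition dirichlet_controls :: "nat \<Rightarrow> nat \<Rightarrow> (nat \<times> nat) set \<Rightarrow> (nat \<Rightarrow> nat) \<Rightarrow> bool" where
  "dirichlet_controls n m E \<pi> \<longleftrightarrow> (\<exists>K. \<forall>X. perm_defect n m \<pi> X \<le> K * dirichlet_form n m E X)"

lemma dirichlet_controls_id: "dirichlet_controls n m E id"
  unfolding dirichlet_controls_def by (auto intro!: exI[of _ 0])

lemma dirichlet_controls_edge:
  assumes "finite E" "e \<in> E"
  shows "dirichlet_controls n m E (edge_transp e)"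
  unfolding dirichlet_controls_def dirichlet_form_def
  using member_le_sum[OF assms(2), of "\<lambda>e. perm_defect n m (edge_transp e) X" for X]
    perm_defect_nonneg assms(1)
  by (intro exI[of _ 1]) simp

lemma dirichlet_controls_comp:
  assumes \<pi>: "\<pi> permutes {0..<m}" and \<sigma>: "\<sigma> permutes {0..<m}"
    and "dirichlet_controls n m E \<pi>" "dirichlet_controls n m E \<sigma>"
  shows "dirichlet_controls n m E (\<sigma> \<circ> \<pi>)"
proof -
  obtain K1 K2 where
    K1: "\<And>X. perm_defect n m \<pi> X \<le> K1 * dirichlet_form n m E X" and
    K2: "\<And>X. perm_defect n m \<sigma> X \<le> K2 * dirichlet_form n m E X"
    using assms(3,4) unfolding dirichlet_controls_def by blast
  have "perm_defect n m (\<sigma> \<circ> \<pi>) X \<le> (2 * K1 + 2 * K2) * dirichlet_form n m E X" for X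
  proof -
    have "op_diff X (permute_op (\<sigma> \<circ> \<pi>) X)
        = (\<lambda>a b. op_diff X (permute_op \<pi> X) a b + permute_op \<pi> (op_diff X (permute_op \<sigma> X)) a b)"
      unfolding permute_op_comp[OF \<pi> \<sigma>, symmetric] permute_op_diff by (simp add: op_diff_def fun_eq_iff)
    then have "perm_defect n m (\<sigma> \<circ> \<pi>) X
        \<le> 2 * perm_defect n m \<pi> X + 2 * hs_norm_sq n m (permute_op \<pi> (op_diff X (permute_op \<sigma> X)))"
      unfolding perm_defect_def by (metis hs_norm_sq_add_le)
    also have "\<dots> = 2 * perm_defect n m \<pi> X + 2 * perm_defect n m \<sigma> X"
      unfolding perm_defect_def hs_norm_sq_permute_op[OF \<pi>] ..
    also have "\<dots> \<le> 2 * (K1 * dirichlet_form n m E X) + 2 * (K2 * dirichlet_form n m E X)"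
      using K1 K2 by (intro add_mono mult_left_mono) auto
    finally show ?thesis by (simp add: algebra_simps)
  qed
  then show ?thesis unfolding dirichlet_controls_def by blast
qed

lemma connected_graph_edge_less:
  "connected_graph m E \<Longrightarrow> e \<in> E \<Longrightarrow> fst e < m \<and> snd e < m"
  unfolding connected_graph_def by auto

lemma connected_graph_finite: "connected_graph m E \<Longrightarrow> finite E"
  unfolding connected_graph_def
  by (rule finite_subset[of _ "{0..<m} \<times> {0..<m}"]) auto

lemma dirichlet_controls_transpose:
  assumes conn: "connected_graph m E" and u: "u < m" and path: "(u, v) \<in> (E \<union> E\<inverse>)\<^sup>*"
  shows "dirichlet_controls n m E (Transposition.transpose u v)"
  using path
proof (induction v rule: rtrancl_induct)
  case base
  show ?case unfolding transpose_same by (rule dirichlet_controls_id)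
next
  case (step w v)
  from step.hyps(2) obtain e where e: "e \<in> E" "edge_transp e = Transposition.transpose w v"
    by (auto simp: transpose_commute)
  have wv: "w < m" "v < m"
    using step.hyps(2) connected_graph_edge_less[OF conn] by fastforce+
  have edge: "dirichlet_controls n m E (Transposition.transpose w v)"
    using dirichlet_controls_edge[OF connected_graph_finite[OF conn] e(1)] e(2) by simp
  have p_wv: "Transposition.transpose w v permutes {0..<m}"
    and p_uw: "Transposition.transpose u w permutes {0..<m}"
    using wv u by (auto intro!: permutes_swap_id)
  consider "v = u" | "w = u" | "w = v" | "u \<noteq> v" "w \<noteq> u" "w \<noteq> v" by blast
  then show ?case
  proof cases
    case 1
    then have "Transposition.transpose u v = id" by simp
    then show ?thesis using dirichlet_controls_id by metis
  next
    case 2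
    then show ?thesis using edge by simp
  next
    case 3
    then show ?thesis using step.IH by simp
  next
    case 4
    \<comment> \<open>conjugate the transposition along the path by the last edge\<close>
    have conj: "Transposition.transpose u v
        = Transposition.transpose w v \<circ> (Transposition.transpose u w \<circ> Transposition.transpose w v)"
      using transpose_comp_triple[of v u w] 4 by (simp add: o_assoc ac_simps)
    show ?thesis
      unfolding conj by (intro dirichlet_controls_comp permutes_compose p_wv p_uw edge step.IH)
  qed
qed

lemma dirichlet_controls_permutes:
  assumes conn: "connected_graph m E" and "\<pi> permutes {0..<m}"
  shows "dirichlet_controls n m E \<pi>"
  using assms(2) finite_atLeastLessThan
proof (induction rule: permutes_induct)
  case id
  then show ?case by (rule dirichlet_controls_id)
next
  case (swap a b p)
  have "(a, b) \<in> (E \<union> E\<inverse>)\<^sup>*" using conn swap.hyps(1,2) unfolding connected_graph_def by auto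
  then have "dirichlet_controls n m E (Transposition.transpose a b)"
    using swap.hyps(1) by (intro dirichlet_controls_transpose[OF conn]) auto
  then show ?case
    by (rule dirichlet_controls_comp[OF swap.hyps(4) permutes_swap_id[OF swap.hyps(1,2)] swap.IH])
qed

lemma poincare_inequality:
  assumes conn: "connected_graph m E"
  obtains K where "\<And>X. sym_avg m X = (\<lambda>a b. 0) \<Longrightarrow> hs_norm_sq n m X \<le> K * dirichlet_form n m E X"
proof -
  have "\<forall>\<pi>\<in>site_perms m. \<exists>K. \<forall>X. perm_defect n m \<pi> X \<le> K * dirichlet_form n m E X"
    using dirichlet_controls_permutes[OF conn] unfolding dirichlet_controls_def by blast
  then obtain K where K: "\<And>\<pi> X. \<pi> \<in> site_perms m \<Longrightarrow> perm_defect n m \<pi> X \<le> K \<pi> * dirichlet_form n m E X"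
    by metis
  define c where "c = 1 / real (fact m)"
  have c_sum: "(\<Sum>\<pi>\<in>site_perms m. c) = 1"
    unfolding c_def by simp
  have "hs_norm_sq n m X \<le> (\<Sum>\<pi>\<in>site_perms m. c * K \<pi>) * dirichlet_form n m E X"
    if X: "sym_avg m X = (\<lambda>a b. 0)" for X
  proof -
    have "X = (\<lambda>a b. \<Sum>\<pi>\<in>site_perms m. complex_of_real c * op_diff X (permute_op \<pi> X) a b)"
    proof (intro ext)
      fix a b
      have "sym_avg m X a b = 0" using X by simp
      then have "(\<Sum>\<pi>\<in>site_perms m. permute_op \<pi> X a b) = 0"
        unfolding sym_avg_def by simp
      moreover have "(\<Sum>\<pi>\<in>site_perms m. complex_of_real c * op_diff X (permute_op \<pi> X) a b) =
          complex_of_real c * (of_nat (card (site_perms m)) * X a b - (\<Sum>\<pi>\<in>site_perms m. permute_op \<pi> X a b))"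
        by (simp add: op_diff_def sum_subtractf sum_distrib_left algebra_simps)
      ultimately show "X a b = (\<Sum>\<pi>\<in>site_perms m. complex_of_real c * op_diff X (permute_op \<pi> X) a b)"
        unfolding c_def by simp
    qed
    then have "hs_norm_sq n m X
        = hs_norm_sq n m (\<lambda>a b. \<Sum>\<pi>\<in>site_perms m. complex_of_real c * op_diff X (permute_op \<pi> X) a b)"
      by simp
    also have "\<dots> \<le> (\<Sum>\<pi>\<in>site_perms m. c * perm_defect n m \<pi> X)"
      unfolding perm_defect_def by (rule hs_norm_sq_convex_comb_le) (use c_sum in \<open>auto simp: c_def\<close>)
    also have "\<dots> \<le> (\<Sum>\<pi>\<in>site_perms m. c * (K \<pi> * dirichlet_form n m E X))"
      by (intro sum_mono mult_left_mono K) (auto simp: c_def)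
    also have "\<dots> = (\<Sum>\<pi>\<in>site_perms m. c * K \<pi>) * dirichlet_form n m E X"
      by (simp add: sum_distrib_right mult.assoc)
    finally show ?thesis .
  qed
  then show ?thesis by (rule that)
qed

section \<open>Decay of the deviation from the symmetrization\<close>

lemma perm_defect_le_nearby:
  assumes "\<pi> permutes {0..<m}"
  shows "perm_defect n m \<pi> Z \<le> 6 * hs_norm_sq n m (op_diff Z Y) + 4 * perm_defect n m \<pi> Y"
proof -
  have split: "op_diff Z (permute_op \<pi> Z) = (\<lambda>a b. op_diff Z Y a b
      + op_diff Y (permute_op \<pi> Y) a b + permute_op \<pi> (op_diff Y Z) a b)"
    by (simp add: fun_eq_iff op_diff_def permute_op_def)
  have "perm_defect n m \<pi> Z \<le> 2 * hs_norm_sq n m (op_diff Z Y) + 4 * perm_defect n m \<pi> Y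
      + 4 * hs_norm_sq n m (permute_op \<pi> (op_diff Y Z))"
    unfolding perm_defect_def split by (rule hs_norm_sq_add3_le)
  also have "hs_norm_sq n m (permute_op \<pi> (op_diff Y Z)) = hs_norm_sq n m (op_diff Z Y)"
    unfolding hs_norm_sq_permute_op[OF assms] by (rule hs_norm_sq_diff_commute)
  finally show ?thesis by simp
qed


lemma LIMSEQ_zero_if_periodic_contraction:
  fixes f :: "nat \<Rightarrow> real"
  assumes nonneg: "\<And>t. 0 \<le> f t" and decr: "\<And>t. f (Suc t) \<le> f t"
    and P: "P > 0" and r: "0 \<le> r" "r < 1" and contr: "\<And>t. f (t + P) \<le> r * f t"
  shows "f \<longlonglongrightarrow> 0"
proof -
  have periods: "f (k * P) \<le> r ^ k * f 0" for k
  proof (induction k)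
    case (Suc k)
    have "f (Suc k * P) \<le> r * f (k * P)" using contr[of "k * P"] by (simp add: add.commute)
    also have "\<dots> \<le> r * (r ^ k * f 0)" using Suc r by (intro mult_left_mono) auto
    finally show ?case by simp
  qed simp
  have bound: "f t \<le> r ^ (t div P) * f 0" for t
  proof -
    have "f t \<le> f (t div P * P)"
      using decseqD[OF decseq_SucI[of f, OF decr], of "t div P * P" t] by simp
    then show ?thesis using periods[of "t div P"] by simp
  qed
  have "(\<lambda>t. r ^ (t div P)) \<longlonglongrightarrow> 0"
    by (rule filterlim_compose[OF LIMSEQ_power_zero filterlim_at_top_div_const_nat]) (use r P in auto)
  then have "(\<lambda>t. r ^ (t div P) * f 0) \<longlonglongrightarrow> 0"
    by (rule tendsto_mult_left_zero)
  then show ?thesis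
    by (rule tendsto_sandwich[rotated 2, OF tendsto_const]) (use nonneg bound in auto)
qed

lemma periodic_window_hits:
  fixes es :: "nat \<Rightarrow> 'a" and P :: nat
  assumes period: "\<And>t. es (t + P) = es t" and P: "P > 0" and "e \<in> es ` {..<P}"
  obtains j where "j < P" "es (t + j) = e"
proof -
  obtain i where i: "i < P" "es i = e" using assms(3) by auto
  have shift: "es (r + k * P) = es r" for r k
  proof (induction k)
    case (Suc k)
    have "es (r + Suc k * P) = es ((r + k * P) + P)" by (simp add: algebra_simps)
    then show ?case using period Suc by simp
  qed simp
  have es_mod: "es s = es (s mod P)" for s
    using shift[of "s mod P" "s div P"] by simp
  define j where "j = (i + P - t mod P) mod P"
  have "(t + j) mod P = (t mod P + (i + P - t mod P)) mod P"
    unfolding j_def by (simp add: mod_add_left_eq mod_add_right_eq)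
  also have "t mod P + (i + P - t mod P) = i + P"
    using mod_less_divisor[OF P, of t] by linarith
  finally have "(t + j) mod P = i" using i by simp
  then have "es (t + j) = e" using es_mod[of "t + j"] i by simp
  moreover have "j < P" unfolding j_def using P by simp
  ultimately show ?thesis using that by blast
qed


lemma gossip_orbit_diff:
  assumes X: "\<And>s. X (Suc s) = gossip \<alpha> (es s) (X s)"
  shows "op_diff (X t) (X (t + j)) = (\<lambda>a b. \<Sum>i<j. complex_of_real \<alpha>
           * op_diff (X (t + i)) (permute_op (edge_transp (es (t + i))) (X (t + i))) a b)"
proof (induction j)
  case (Suc j)
  then show ?case
    using X[of "t + j"] by (auto simp: fun_eq_iff op_diff_def gossip_def algebra_simps of_real_diff)
qed (simp add: op_diff_def fun_eq_iff)

lemma gossip_orbit_drift_le: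
  assumes X: "\<And>s. X (Suc s) = gossip \<alpha> (es s) (X s)" and \<alpha>: "0 \<le> \<alpha>" "\<alpha> \<le> 1"
  shows "hs_norm_sq n m (op_diff (X t) (X (t + j)))
           \<le> j * (\<Sum>i<j. perm_defect n m (edge_transp (es (t + i))) (X (t + i)))"
proof -
  have "hs_norm_sq n m (op_diff (X t) (X (t + j)))
      \<le> card {..<j} * (\<Sum>i<j. hs_norm_sq n m (\<lambda>a b. complex_of_real \<alpha>
           * op_diff (X (t + i)) (permute_op (edge_transp (es (t + i))) (X (t + i))) a b))"
    unfolding gossip_orbit_diff[of X \<alpha> es, OF X] by (rule hs_norm_sq_sum_le) simp
  also have "\<dots> = j * (\<Sum>i<j. \<alpha>\<^sup>2 * perm_defect n m (edge_transp (es (t + i))) (X (t + i)))"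
    unfolding hs_norm_sq_scale perm_defect_def using \<alpha> by simp
  also have "\<dots> \<le> j * (\<Sum>i<j. perm_defect n m (edge_transp (es (t + i))) (X (t + i)))"
    using \<alpha> perm_defect_nonneg
    by (intro mult_left_mono sum_mono mult_left_le_one_le) (auto simp: power_le_one)
  finally show ?thesis .
qed

lemma gossip_orbit_dissipation:
  assumes X: "\<And>s. X (Suc s) = gossip \<alpha> (es s) (X s)"
    and edges: "\<And>s. fst (es s) < m \<and> snd (es s) < m"
  shows "hs_norm_sq n m (X t) - hs_norm_sq n m (X (t + k))
           = \<alpha> * (1 - \<alpha>) * (\<Sum>i<k. perm_defect n m (edge_transp (es (t + i))) (X (t + i)))"
proof (induction k)
  case (Suc k)
  have "hs_norm_sq n m (X (t + Suc k)) = hs_norm_sq n m (X (t + k))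
      - \<alpha> * (1 - \<alpha>) * perm_defect n m (edge_transp (es (t + k))) (X (t + k))"
    using X[of "t + k"] hs_norm_sq_gossip[of "es (t + k)" m n \<alpha> "X (t + k)"] edges by simp
  with Suc show ?case by (simp add: algebra_simps)
qed simp


text \<open>Every edge is used within one period, and the state moves little during the period unless
  much is dissipated; this bounds the Dirichlet form by the dissipation over the period.\<close>

lemma periodic_dirichlet_le_dissipation:
  assumes conn: "connected_graph m E" and \<alpha>: "0 \<le> \<alpha>" "\<alpha> \<le> 1"
    and es: "\<And>s. es s \<in> E" and period: "\<And>s. es (s + P) = es s" and P: "P > 0" "E \<subseteq> es ` {..<P}"
    and X: "\<And>s. X (Suc s) = gossip \<alpha> (es s) (X s)"
  shows "dirichlet_form n m E (X t)
           \<le> card E * (6 * P + 4) * (\<Sum>i<P. perm_defect n m (edge_transp (es (t + i))) (X (t + i)))"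
    (is "_ \<le> _ * ?S")
proof -
  have S_nonneg: "0 \<le> ?S" by (intro sum_nonneg perm_defect_nonneg)
  have "perm_defect n m (edge_transp e) (X t) \<le> (6 * P + 4) * ?S" if e: "e \<in> E" for e
  proof -
    obtain j where j: "j < P" "es (t + j) = e"
      using periodic_window_hits[of es P, OF period P(1)] P(2) e by blast
    have e_perm: "edge_transp e permutes {0..<m}"
      using connected_graph_edge_less[OF conn e] by (intro edge_transp_permutes) auto
    have "(\<Sum>i<j. perm_defect n m (edge_transp (es (t + i))) (X (t + i))) \<le> ?S"
      using j(1) by (intro sum_mono2 perm_defect_nonneg) auto
    then have "real j * (\<Sum>i<j. perm_defect n m (edge_transp (es (t + i))) (X (t + i))) \<le> P * ?S"
      using j(1) S_nonneg by (intro mult_mono sum_nonneg perm_defect_nonneg) auto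
    then have drift: "hs_norm_sq n m (op_diff (X t) (X (t + j))) \<le> P * ?S"
      using gossip_orbit_drift_le[of X \<alpha> es, OF X \<alpha>, of n m t j] by linarith
    have "perm_defect n m (edge_transp (es (t + j))) (X (t + j)) \<le> ?S"
      using j(1) perm_defect_nonneg
      by (intro member_le_sum[of j "{..<P}" "\<lambda>i. perm_defect n m (edge_transp (es (t + i))) (X (t + i))"]) auto
    then have "perm_defect n m (edge_transp e) (X (t + j)) \<le> ?S"
      using j(2) by simp
    then have "perm_defect n m (edge_transp e) (X t) \<le> 6 * (P * ?S) + 4 * ?S"
      using perm_defect_le_nearby[OF e_perm, of n "X t" "X (t + j)"] drift by linarith
    then show ?thesis by (simp add: algebra_simps)
  qed
  then have "dirichlet_form n m E (X t) \<le> (\<Sum>e\<in>E. (6 * P + 4) * ?S)"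
    unfolding dirichlet_form_def by (intro sum_mono)
  then show ?thesis by simp
qed

lemma periodic_gossip_tendsto_zero:
  assumes conn: "connected_graph m E" and \<alpha>: "0 < \<alpha>" "\<alpha> < 1"
    and es: "\<And>s. es s \<in> E" and period: "\<And>s. es (s + P) = es s" and P: "P > 0" "E \<subseteq> es ` {..<P}"
    and X: "\<And>s. X (Suc s) = gossip \<alpha> (es s) (X s)" and sym: "\<And>s. sym_avg m (X s) = (\<lambda>a b. 0)"
  shows "(\<lambda>t. hs_norm_sq n m (X t)) \<longlonglongrightarrow> 0"
proof -
  define c where "c = \<alpha> * (1 - \<alpha>)"
  have c: "c > 0" using \<alpha> unfolding c_def by simp
  have edges: "fst (es s) < m \<and> snd (es s) < m" for s
    using connected_graph_edge_less[OF conn es] .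
  obtain K where K: "\<And>Y. sym_avg m Y = (\<lambda>a b. 0) \<Longrightarrow> hs_norm_sq n m Y \<le> K * dirichlet_form n m E Y"
    using poincare_inequality[OF conn, where n=n] by blast
  define L where "L = \<bar>K\<bar> * card E * (6 * P + 4) / c + 1"
  have L: "L \<ge> 1" unfolding L_def using c by simp
  have decr: "hs_norm_sq n m (X (Suc t)) \<le> hs_norm_sq n m (X t)" for t
  proof -
    have "0 \<le> \<alpha> * (1 - \<alpha>) * perm_defect n m (edge_transp (es t)) (X t)"
      using \<alpha> by (simp add: perm_defect_nonneg)
    then show ?thesis using gossip_orbit_dissipation[of X \<alpha> es m, OF X edges, of n t 1] by simp
  qed
  have key: "hs_norm_sq n m (X t) \<le> L * (hs_norm_sq n m (X t) - hs_norm_sq n m (X (t + P)))" for t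
  proof -
    define D where "D = hs_norm_sq n m (X t) - hs_norm_sq n m (X (t + P))"
    have D: "D \<ge> 0" unfolding D_def using decseqD[OF decseq_SucI[of "\<lambda>t. hs_norm_sq n m (X t)", OF decr], of t "t + P"] by simp
    have "hs_norm_sq n m (X t) \<le> \<bar>K\<bar> * dirichlet_form n m E (X t)"
      using K[OF sym] dirichlet_form_nonneg by (meson abs_ge_self mult_right_mono order_trans)
    also have "\<dots> \<le> \<bar>K\<bar> * (card E * (6 * P + 4) * (D / c))"
      using periodic_dirichlet_le_dissipation[of m E \<alpha> es P X, OF conn _ _ es period P X, of n t] \<alpha> c
        gossip_orbit_dissipation[of X \<alpha> es m, OF X edges, of n t P]
      by (intro mult_left_mono) (auto simp: D_def c_def)
    also have "\<dots> \<le> L * D"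
      unfolding L_def using D c by (simp add: field_simps)
    finally show ?thesis unfolding D_def .
  qed
  have "hs_norm_sq n m (X (t + P)) \<le> (1 - 1 / L) * hs_norm_sq n m (X t)" for t
  proof -
    have "hs_norm_sq n m (X t) / L \<le> hs_norm_sq n m (X t) - hs_norm_sq n m (X (t + P))"
      using key[of t] L by (simp add: field_simps)
    then show ?thesis by (simp add: algebra_simps)
  qed
  then show ?thesis
    using L by (intro LIMSEQ_zero_if_periodic_contraction[where f="\<lambda>t. hs_norm_sq n m (X t)" and r="1 - 1 / L", OF hs_norm_sq_nonneg decr P(1)]) auto
qed

lemma sum_pmf_set_pmf: "set_pmf Q = E \<Longrightarrow> finite E \<Longrightarrow> (\<Sum>e\<in>E. pmf Q e) = 1"
  by (rule sum_pmf_eq_1) auto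

lemma expected_hs_norm_sq_gossip:
  assumes conn: "connected_graph m E" and Q: "set_pmf Q = E"
  shows "(\<Sum>e\<in>E. pmf Q e * hs_norm_sq n m (gossip \<alpha> e X))
           = hs_norm_sq n m X - \<alpha> * (1 - \<alpha>) * (\<Sum>e\<in>E. pmf Q e * perm_defect n m (edge_transp e) X)"
proof -
  have "(\<Sum>e\<in>E. pmf Q e * hs_norm_sq n m (gossip \<alpha> e X))
      = (\<Sum>e\<in>E. pmf Q e * (hs_norm_sq n m X - \<alpha> * (1 - \<alpha>) * perm_defect n m (edge_transp e) X))"
    using hs_norm_sq_gossip connected_graph_edge_less[OF conn] by (intro sum.cong) auto
  also have "\<dots> = (\<Sum>e\<in>E. pmf Q e) * hs_norm_sq n m X
      - \<alpha> * (1 - \<alpha>) * (\<Sum>e\<in>E. pmf Q e * perm_defect n m (edge_transp e) X)"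
    by (simp add: right_diff_distrib sum_subtractf sum_distrib_left sum_distrib_right mult.left_commute)
  finally show ?thesis
    using sum_pmf_set_pmf[OF Q connected_graph_finite[OF conn]] by simp
qed

lemma expected_gossip_contraction:
  assumes conn: "connected_graph m E" and \<alpha>: "0 < \<alpha>" "\<alpha> < 1" and Q: "set_pmf Q = E"
  shows "\<exists>r. 0 \<le> r \<and> r < 1 \<and> (\<forall>X. sym_avg m X = (\<lambda>a b. 0) \<longrightarrow>
      (\<Sum>e\<in>E. pmf Q e * hs_norm_sq n m (gossip \<alpha> e X)) \<le> r * hs_norm_sq n m X)"
proof -
  have finE: "finite E" by (rule connected_graph_finite[OF conn])
  have E_ne: "E \<noteq> {}" using set_pmf_not_empty[of Q] Q by simp
  define q where "q = Min (pmf Q ` E)"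
  have q_pos: "q > 0" unfolding q_def using finE E_ne Q by (auto simp: pmf_positive)
  have q_le: "q \<le> pmf Q e" if "e \<in> E" for e unfolding q_def using finE that by auto
  have q_le_1: "q \<le> 1"
  proof -
    obtain e where "e \<in> E" using E_ne by blast
    then show ?thesis using q_le[of e] pmf_le_1[of Q e] by simp
  qed
  define c where "c = \<alpha> * (1 - \<alpha>)"
  have c: "c > 0" "c \<le> 1" using \<alpha> unfolding c_def by (auto intro: mult_le_one)
  obtain K where K: "\<And>Y. sym_avg m Y = (\<lambda>a b. 0) \<Longrightarrow> hs_norm_sq n m Y \<le> K * dirichlet_form n m E Y"
    using poincare_inequality[OF conn, where n=n] by blast
  define r where "r = 1 - c * q / (\<bar>K\<bar> + 1)"
  have "c * q \<le> 1 * 1" using c q_le_1 q_pos by (intro mult_mono) auto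
  then have r: "0 \<le> r" "r < 1" unfolding r_def using c q_pos by (auto simp: add_pos_nonneg)
  show ?thesis
  proof (intro exI[of _ r] conjI allI impI)
    show "0 \<le> r" "r < 1" by (fact r)+
    fix X assume X: "sym_avg m X = (\<lambda>a b. 0)"
    have "K * dirichlet_form n m E X \<le> (\<bar>K\<bar> + 1) * dirichlet_form n m E X"
      by (intro mult_right_mono dirichlet_form_nonneg) simp
    then have "hs_norm_sq n m X \<le> (\<bar>K\<bar> + 1) * dirichlet_form n m E X"
      using K[OF X] by linarith
    then have "hs_norm_sq n m X / (\<bar>K\<bar> + 1) \<le> dirichlet_form n m E X"
      by (simp add: pos_divide_le_eq add_pos_nonneg mult.commute)
    then have poincare: "c * q * (hs_norm_sq n m X / (\<bar>K\<bar> + 1)) \<le> c * q * dirichlet_form n m E X"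
      using c q_pos by (intro mult_left_mono) auto
    have "q * dirichlet_form n m E X \<le> (\<Sum>e\<in>E. pmf Q e * perm_defect n m (edge_transp e) X)"
      unfolding dirichlet_form_def sum_distrib_left
      using q_le perm_defect_nonneg by (intro sum_mono mult_right_mono) auto
    then have "c * q * dirichlet_form n m E X \<le> c * (\<Sum>e\<in>E. pmf Q e * perm_defect n m (edge_transp e) X)"
      using c mult_left_mono[of _ _ c] by (simp add: mult.assoc)
    then have "(\<Sum>e\<in>E. pmf Q e * hs_norm_sq n m (gossip \<alpha> e X)) \<le> hs_norm_sq n m X - c * q * dirichlet_form n m E X"
      unfolding expected_hs_norm_sq_gossip[OF conn Q] c_def[symmetric] by simp
    also have "\<dots> \<le> r * hs_norm_sq n m X"
      using poincare unfolding r_def by (simp add: algebra_simps)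
    finally show "(\<Sum>e\<in>E. pmf Q e * hs_norm_sq n m (gossip \<alpha> e X)) \<le> r * hs_norm_sq n m X" .
  qed
qed

lemma expected_gossip_tendsto_zero:
  assumes conn: "connected_graph m E" and \<alpha>: "0 < \<alpha>" "\<alpha> < 1" and Q: "set_pmf Q = E"
    and Y: "\<And>t. Y (Suc t) = (\<lambda>a b. \<Sum>e\<in>E. complex_of_real (pmf Q e) * gossip \<alpha> e (Y t) a b)"
    and sym: "\<And>t. sym_avg m (Y t) = (\<lambda>a b. 0)"
  shows "(\<lambda>t. hs_norm_sq n m (Y t)) \<longlonglongrightarrow> 0"
proof -
  have finE: "finite E" by (rule connected_graph_finite[OF conn])
  obtain r where r: "0 \<le> r" "r < 1" and contr: "\<forall>X. sym_avg m X = (\<lambda>a b. 0) \<longrightarrow>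
      (\<Sum>e\<in>E. pmf Q e * hs_norm_sq n m (gossip \<alpha> e X)) \<le> r * hs_norm_sq n m X"
    using expected_gossip_contraction[OF conn \<alpha> Q, where n=n] by blast
  have step: "hs_norm_sq n m (Y (Suc t)) \<le> r * hs_norm_sq n m (Y t)" for t
  proof -
    have "hs_norm_sq n m (Y (Suc t)) \<le> (\<Sum>e\<in>E. pmf Q e * hs_norm_sq n m (gossip \<alpha> e (Y t)))"
      unfolding Y by (rule hs_norm_sq_convex_comb_le) (auto simp: sum_pmf_set_pmf[OF Q finE])
    also have "\<dots> \<le> r * hs_norm_sq n m (Y t)" using contr sym by simp
    finally show ?thesis .
  qed
  have decr: "hs_norm_sq n m (Y (Suc t)) \<le> hs_norm_sq n m (Y t)" for t
  proof -
    have "r * hs_norm_sq n m (Y t) \<le> hs_norm_sq n m (Y t)"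
      using r hs_norm_sq_nonneg by (intro mult_left_le_one_le) auto
    with step[of t] show ?thesis by linarith
  qed
  show ?thesis
    using LIMSEQ_zero_if_periodic_contraction[where f="\<lambda>t. hs_norm_sq n m (Y t)" and P=1,
        OF hs_norm_sq_nonneg decr _ r] step by simp
qed

section \<open>Convergence to symmetric state consensus\<close>

lemma density_op_self_adjoint: "density_op n m \<rho> \<Longrightarrow> self_adjoint n m \<rho>"
  unfolding density_op_def by (rule conjunct1)

lemma density_op_trace: "density_op n m \<rho> \<Longrightarrow> op_trace n m \<rho> = 1"
  unfolding density_op_def by (rule conjunct2[OF conjunct2])

lemma density_op_quadratic_form:
  assumes "density_op n m \<rho>"
  shows "Im (\<Sum>a\<in>Idx n m. \<Sum>b\<in>Idx n m. cnj (v a) * \<rho> a b * v b) = 0 \<and>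
    0 \<le> Re (\<Sum>a\<in>Idx n m. \<Sum>b\<in>Idx n m. cnj (v a) * \<rho> a b * v b)"
proof -
  have "\<forall>v :: idx \<Rightarrow> complex. let q = (\<Sum>a\<in>Idx n m. \<Sum>b\<in>Idx n m. cnj (v a) * \<rho> a b * v b)
      in Im q = 0 \<and> Re q \<ge> 0"
    using assms unfolding density_op_def by (rule conjunct1[OF conjunct2])
  then show ?thesis unfolding Let_def by (rule spec)
qed

lemma density_opI:
  assumes "self_adjoint n m \<rho>" "op_trace n m \<rho> = 1"
    and "\<And>v. Im (\<Sum>a\<in>Idx n m. \<Sum>b\<in>Idx n m. cnj (v a) * \<rho> a b * v b) = 0 \<and>
      0 \<le> Re (\<Sum>a\<in>Idx n m. \<Sum>b\<in>Idx n m. cnj (v a) * \<rho> a b * v b)"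
  shows "density_op n m \<rho>"
  unfolding density_op_def Let_def using assms by blast

lemma density_op_permute_op:
  assumes \<rho>: "density_op n m \<rho>" and \<pi>: "\<pi> permutes {0..<m}"
  shows "density_op n m (permute_op \<pi> \<rho>)"
proof (rule density_opI)
  note reindex = sum_Idx_comp_permutes[OF permutes_inv[OF \<pi>]]
  have sa: "supported n m \<rho>" "\<And>a b. \<rho> b a = cnj (\<rho> a b)"
    using density_op_self_adjoint[OF \<rho>] unfolding self_adjoint_def by blast+
  have "supported n m (permute_op \<pi> \<rho>)"
    unfolding supported_def
  proof (intro allI impI)
    fix a b assume "a \<notin> Idx n m \<or> b \<notin> Idx n m"
    then have "a \<circ> inv \<pi> \<notin> Idx n m \<or> b \<circ> inv \<pi> \<notin> Idx n m"
      unfolding Idx_comp_permutes_iff[OF permutes_inv[OF \<pi>]] .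
    then show "permute_op \<pi> \<rho> a b = 0"
      using sa(1) unfolding supported_def permute_op_def by blast
  qed
  moreover have "\<forall>a b. permute_op \<pi> \<rho> b a = cnj (permute_op \<pi> \<rho> a b)"
    unfolding permute_op_def using sa(2) by blast
  ultimately show "self_adjoint n m (permute_op \<pi> \<rho>)"
    unfolding self_adjoint_def by blast
  have "(\<Sum>a\<in>Idx n m. \<rho> (a \<circ> inv \<pi>) (a \<circ> inv \<pi>)) = (\<Sum>a\<in>Idx n m. \<rho> a a)"
    by (rule reindex)
  then show "op_trace n m (permute_op \<pi> \<rho>) = 1"
    using density_op_trace[OF \<rho>] unfolding op_trace_def permute_op_def by simp
  fix v :: "idx \<Rightarrow> complex"
  define w where "w a = v (a \<circ> \<pi>)" for a
  have inv_comp: "a \<circ> inv \<pi> \<circ> \<pi> = a" for a :: idx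
    using permutes_inv_o(2)[OF \<pi>] by (simp add: o_assoc[symmetric])
  have "(\<Sum>a\<in>Idx n m. \<Sum>b\<in>Idx n m. cnj (v a) * permute_op \<pi> \<rho> a b * v b)
      = (\<Sum>a\<in>Idx n m. \<Sum>b\<in>Idx n m.
           cnj (w (a \<circ> inv \<pi>)) * \<rho> (a \<circ> inv \<pi>) (b \<circ> inv \<pi>) * w (b \<circ> inv \<pi>))"
    unfolding permute_op_def w_def inv_comp ..
  also have "\<dots> = (\<Sum>a\<in>Idx n m. \<Sum>b\<in>Idx n m. cnj (w (a \<circ> inv \<pi>)) * \<rho> (a \<circ> inv \<pi>) b * w b)"
    by (intro sum.cong refl reindex)
  also have "\<dots> = (\<Sum>a\<in>Idx n m. \<Sum>b\<in>Idx n m. cnj (w a) * \<rho> a b * w b)"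
    by (rule reindex[where f="\<lambda>a. \<Sum>b\<in>Idx n m. cnj (w a) * \<rho> a b * w b"])
  finally show "Im (\<Sum>a\<in>Idx n m. \<Sum>b\<in>Idx n m. cnj (v a) * permute_op \<pi> \<rho> a b * v b) = 0 \<and>
      0 \<le> Re (\<Sum>a\<in>Idx n m. \<Sum>b\<in>Idx n m. cnj (v a) * permute_op \<pi> \<rho> a b * v b)"
    using density_op_quadratic_form[OF \<rho>, of w] by simp
qed

lemma density_op_convex_comb:
  fixes c :: "'i \<Rightarrow> real"
  assumes "\<And>i. i \<in> A \<Longrightarrow> c i \<ge> 0" "(\<Sum>i\<in>A. c i) = 1"
    and \<rho>: "\<And>i. i \<in> A \<Longrightarrow> density_op n m (\<rho> i)"
  shows "density_op n m (\<lambda>a b. \<Sum>i\<in>A. complex_of_real (c i) * \<rho> i a b)"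
proof (rule density_opI)
  have sa: "\<And>i. i \<in> A \<Longrightarrow> supported n m (\<rho> i)" "\<And>i a b. i \<in> A \<Longrightarrow> \<rho> i b a = cnj (\<rho> i a b)"
    using density_op_self_adjoint[OF \<rho>] unfolding self_adjoint_def by blast+
  have "supported n m (\<lambda>a b. \<Sum>i\<in>A. complex_of_real (c i) * \<rho> i a b)"
    unfolding supported_def
  proof (intro allI impI)
    fix a b assume "a \<notin> Idx n m \<or> b \<notin> Idx n m"
    then show "(\<Sum>i\<in>A. complex_of_real (c i) * \<rho> i a b) = 0"
      using sa(1) unfolding supported_def by (intro sum.neutral) auto
  qed
  moreover have "\<forall>a b. (\<Sum>i\<in>A. complex_of_real (c i) * \<rho> i b a)
      = cnj (\<Sum>i\<in>A. complex_of_real (c i) * \<rho> i a b)"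
  proof (intro allI)
    fix a b
    have "complex_of_real (c i) * \<rho> i b a = cnj (complex_of_real (c i) * \<rho> i a b)" if "i \<in> A" for i
      using sa(2)[OF that, of a b] by simp
    then show "(\<Sum>i\<in>A. complex_of_real (c i) * \<rho> i b a) = cnj (\<Sum>i\<in>A. complex_of_real (c i) * \<rho> i a b)"
      unfolding cnj_sum by (intro sum.cong refl) blast
  qed
  ultimately show "self_adjoint n m (\<lambda>a b. \<Sum>i\<in>A. complex_of_real (c i) * \<rho> i a b)"
    unfolding self_adjoint_def by blast
  have "op_trace n m (\<lambda>a b. \<Sum>i\<in>A. complex_of_real (c i) * \<rho> i a b)
      = (\<Sum>i\<in>A. complex_of_real (c i) * op_trace n m (\<rho> i))"
    unfolding op_trace_def by (simp add: sum_distrib_left sum.swap[of _ A])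
  also have "\<dots> = (\<Sum>i\<in>A. complex_of_real (c i))"
    using density_op_trace[OF \<rho>] by simp
  also have "\<dots> = 1" using assms(2) by (metis of_real_1 of_real_sum)
  finally show "op_trace n m (\<lambda>a b. \<Sum>i\<in>A. complex_of_real (c i) * \<rho> i a b) = 1" .
  fix v :: "idx \<Rightarrow> complex"
  define q where "q i = (\<Sum>a\<in>Idx n m. \<Sum>b\<in>Idx n m. cnj (v a) * \<rho> i a b * v b)" for i
  have q: "Im (q i) = 0 \<and> 0 \<le> Re (q i)" if "i \<in> A" for i
    unfolding q_def by (rule density_op_quadratic_form[OF \<rho>[OF that]])
  have "(\<Sum>a\<in>Idx n m. \<Sum>b\<in>Idx n m. cnj (v a) * (\<Sum>i\<in>A. complex_of_real (c i) * \<rho> i a b) * v b)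
      = (\<Sum>i\<in>A. complex_of_real (c i) * q i)"
    unfolding q_def by (simp add: sum_distrib_left sum_distrib_right sum.swap[of _ A] algebra_simps)
  then show "Im (\<Sum>a\<in>Idx n m. \<Sum>b\<in>Idx n m.
        cnj (v a) * (\<Sum>i\<in>A. complex_of_real (c i) * \<rho> i a b) * v b) = 0 \<and>
      0 \<le> Re (\<Sum>a\<in>Idx n m. \<Sum>b\<in>Idx n m. cnj (v a) * (\<Sum>i\<in>A. complex_of_real (c i) * \<rho> i a b) * v b)"
    using q assms(1) by (auto simp: Im_sum Re_sum intro!: sum.neutral sum_nonneg)
qed

lemma sym_avg_in_SSC:
  assumes "density_op n m \<rho>"
  shows "sym_avg m \<rho> \<in> SSC n m"
proof -
  have "density_op n m (sym_avg m \<rho>)"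
    unfolding sym_avg_eq_convex_comb
    by (rule density_op_convex_comb) (use assms density_op_permute_op in auto)
  then show ?thesis unfolding SSC_def using permute_op_sym_avg by blast
qed

lemma converges_toI:
  assumes "(\<lambda>t. hs_norm_sq n m (op_diff (\<rho> t) \<sigma>)) \<longlonglongrightarrow> 0"
  shows "converges_to n m \<rho> \<sigma>"
  unfolding converges_to_def hs_norm_eq_sqrt
  using tendsto_real_sqrt[OF assms] by (simp add: op_diff_def)

lemma achieves_SSC_if_converges_to_sym_avg:
  assumes "\<And>\<rho>0. density_op n m \<rho>0 \<Longrightarrow> converges_to n m (F \<rho>0) (sym_avg m \<rho>0)"
  shows "achieves_SSC n m F"
  unfolding achieves_SSC_def
proof (intro allI impI)
  fix \<rho>0 assume \<rho>0: "density_op n m \<rho>0"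
  define d where "d t \<sigma> = hs_norm n m (\<lambda>a b. F \<rho>0 t a b - \<sigma> a b)" for t \<sigma>
  have d_nonneg: "0 \<le> d t \<sigma>" for t \<sigma>
    unfolding d_def hs_norm_eq_sqrt by (simp add: hs_norm_sq_nonneg)
  have sym: "sym_avg m \<rho>0 \<in> SSC n m" by (rule sym_avg_in_SSC[OF \<rho>0])
  have upper: "(INF \<sigma>\<in>SSC n m. d t \<sigma>) \<le> d t (sym_avg m \<rho>0)" for t
  proof (rule cINF_lower[OF _ sym])
    show "bdd_below ((d t) ` SSC n m)" using d_nonneg by (intro bdd_belowI2)
  qed
  have lower: "0 \<le> (INF \<sigma>\<in>SSC n m. d t \<sigma>)" for t
    using sym d_nonneg by (intro cINF_greatest) blast+
  have lim: "(\<lambda>t. d t (sym_avg m \<rho>0)) \<longlonglongrightarrow> 0"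
    using assms[OF \<rho>0] unfolding converges_to_def d_def .
  show "(\<lambda>t. INF \<sigma>\<in>SSC n m. d t \<sigma>) \<longlonglongrightarrow> 0"
  proof (rule tendsto_sandwich[OF _ _ tendsto_const lim])
    show "\<forall>\<^sub>F t in sequentially. 0 \<le> (INF \<sigma>\<in>SSC n m. d t \<sigma>)"
      using lower by simp
    show "\<forall>\<^sub>F t in sequentially. (INF \<sigma>\<in>SSC n m. d t \<sigma>) \<le> d t (sym_avg m \<rho>0)"
      using upper by simp
  qed
qed

lemma sym_avg_traj:
  assumes "\<And>s. fst (es s) < m \<and> snd (es s) < m"
  shows "sym_avg m (traj \<alpha> es \<rho>0 t) = sym_avg m \<rho>0"
  using assms by (induction t) (auto simp: sym_avg_gossip)

lemma traj_deviation_Suc: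
  assumes "fst (es t) < m" "snd (es t) < m"
  shows "op_diff (traj \<alpha> es \<rho>0 (Suc t)) (sym_avg m \<rho>0)
           = gossip \<alpha> (es t) (op_diff (traj \<alpha> es \<rho>0 t) (sym_avg m \<rho>0))"
  using gossip_op_diff_fixed[OF permute_op_sym_avg[OF edge_transp_permutes[OF assms]]] by simp

lemma sym_avg_exp_traj:
  assumes conn: "connected_graph m E" and Q: "set_pmf Q = E"
  shows "sym_avg m (exp_traj \<alpha> Q E \<rho>0 t) = sym_avg m \<rho>0"
proof (induction t)
  case (Suc t)
  have "sym_avg m (exp_traj \<alpha> Q E \<rho>0 (Suc t))
      = (\<lambda>a b. \<Sum>e\<in>E. complex_of_real (pmf Q e) * sym_avg m (gossip \<alpha> e (exp_traj \<alpha> Q E \<rho>0 t)) a b)"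
    by (simp add: sym_avg_sum)
  also have "\<dots> = (\<lambda>a b. \<Sum>e\<in>E. complex_of_real (pmf Q e) * sym_avg m \<rho>0 a b)"
    using sym_avg_gossip connected_graph_edge_less[OF conn] Suc by (intro ext sum.cong) auto
  also have "\<dots> = sym_avg m \<rho>0"
    using sum_pmf_set_pmf[OF Q connected_graph_finite[OF conn]]
    by (simp add: fun_eq_iff flip: sum_distrib_right of_real_sum)
  finally show ?case .
qed simp

lemma exp_traj_deviation_Suc:
  assumes conn: "connected_graph m E" and Q: "set_pmf Q = E"
  shows "op_diff (exp_traj \<alpha> Q E \<rho>0 (Suc t)) (sym_avg m \<rho>0) = (\<lambda>a b. \<Sum>e\<in>E.
      complex_of_real (pmf Q e) * gossip \<alpha> e (op_diff (exp_traj \<alpha> Q E \<rho>0 t) (sym_avg m \<rho>0)) a b)"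
proof (intro ext)
  fix a b
  have "gossip \<alpha> e (op_diff (exp_traj \<alpha> Q E \<rho>0 t) (sym_avg m \<rho>0)) a b
      = gossip \<alpha> e (exp_traj \<alpha> Q E \<rho>0 t) a b - sym_avg m \<rho>0 a b" if "e \<in> E" for e
  proof -
    have "fst e < m" "snd e < m" using connected_graph_edge_less[OF conn that] by auto
    from gossip_op_diff_fixed[OF permute_op_sym_avg[OF edge_transp_permutes[OF this]]]
    show ?thesis by (simp add: op_diff_def)
  qed
  then have "(\<Sum>e\<in>E. complex_of_real (pmf Q e)
        * gossip \<alpha> e (op_diff (exp_traj \<alpha> Q E \<rho>0 t) (sym_avg m \<rho>0)) a b)
      = (\<Sum>e\<in>E. complex_of_real (pmf Q e) * gossip \<alpha> e (exp_traj \<alpha> Q E \<rho>0 t) a b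
          - complex_of_real (pmf Q e) * sym_avg m \<rho>0 a b)"
    by (intro sum.cong refl) (simp only: right_diff_distrib)
  also have "\<dots> = (\<Sum>e\<in>E. complex_of_real (pmf Q e) * gossip \<alpha> e (exp_traj \<alpha> Q E \<rho>0 t) a b)
        - (\<Sum>e\<in>E. complex_of_real (pmf Q e)) * sym_avg m \<rho>0 a b"
    by (simp add: sum_subtractf sum_distrib_right)
  also have "(\<Sum>e\<in>E. complex_of_real (pmf Q e)) = 1"
    using sum_pmf_set_pmf[OF Q connected_graph_finite[OF conn]] by (metis of_real_1 of_real_sum)
  finally show "op_diff (exp_traj \<alpha> Q E \<rho>0 (Suc t)) (sym_avg m \<rho>0) a b = (\<Sum>e\<in>E.
      complex_of_real (pmf Q e) * gossip \<alpha> e (op_diff (exp_traj \<alpha> Q E \<rho>0 t) (sym_avg m \<rho>0)) a b)"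
    by (simp add: op_diff_def)
qed

lemma periodic_schedule_converges_to_sym_avg:
  assumes conn: "connected_graph m E" and \<alpha>: "0 < \<alpha>" "\<alpha> < 1" and sched: "periodic_schedule E es"
  shows "converges_to n m (traj \<alpha> es \<rho>0) (sym_avg m \<rho>0)"
proof -
  obtain P where P: "P > 0" "\<And>t. es (t + P) = es t" "E \<subseteq> es ` {..<P}" and es: "\<And>t. es t \<in> E"
    using sched unfolding periodic_schedule_def by blast
  have edges: "fst (es t) < m \<and> snd (es t) < m" for t
    using connected_graph_edge_less[OF conn es] .
  show ?thesis
  proof (rule converges_toI, rule periodic_gossip_tendsto_zero[OF conn \<alpha> es P(2,1,3)])
    show "op_diff (traj \<alpha> es \<rho>0 (Suc t)) (sym_avg m \<rho>0)
        = gossip \<alpha> (es t) (op_diff (traj \<alpha> es \<rho>0 t) (sym_avg m \<rho>0))" for t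
      using edges[of t] by (intro traj_deviation_Suc) auto
    show "sym_avg m (op_diff (traj \<alpha> es \<rho>0 t) (sym_avg m \<rho>0)) = (\<lambda>a b. 0)" for t
      by (rule sym_avg_diff_sym_avg[OF sym_avg_traj]) (rule edges)
  qed
qed

lemma expected_state_converges_to_sym_avg:
  assumes conn: "connected_graph m E" and \<alpha>: "0 < \<alpha>" "\<alpha> < 1" and Q: "set_pmf Q = E"
  shows "converges_to n m (exp_traj \<alpha> Q E \<rho>0) (sym_avg m \<rho>0)"
proof (rule converges_toI, rule expected_gossip_tendsto_zero[OF conn \<alpha> Q])
  show "op_diff (exp_traj \<alpha> Q E \<rho>0 (Suc t)) (sym_avg m \<rho>0) = (\<lambda>a b. \<Sum>e\<in>E.
      complex_of_real (pmf Q e) * gossip \<alpha> e (op_diff (exp_traj \<alpha> Q E \<rho>0 t) (sym_avg m \<rho>0)) a b)" for t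
    by (rule exp_traj_deviation_Suc[OF conn Q])
  show "sym_avg m (op_diff (exp_traj \<alpha> Q E \<rho>0 t) (sym_avg m \<rho>0)) = (\<lambda>a b. 0)" for t
    by (rule sym_avg_diff_sym_avg[OF sym_avg_exp_traj[OF conn Q]])
qed

section \<open>Random trajectories\<close>

abbreviation trace_mult :: "nat \<Rightarrow> nat \<Rightarrow> op \<Rightarrow> op \<Rightarrow> complex" where
  "trace_mult n m A B \<equiv> op_trace n m (op_mult n m A B)"

lemma trace_mult_eq: "trace_mult n m A B = (\<Sum>a\<in>Idx n m. \<Sum>c\<in>Idx n m. A a c * B c a)"
  unfolding op_trace_def op_mult_def by simp

text \<open>Unlike \<open>self_adjoint\<close>, no support condition is imposed, so the property is
  preserved by \<open>permute_op \<pi>\<close> for arbitrary \<open>\<pi>\<close>.\<close>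

definition hermitian_op :: "op \<Rightarrow> bool" where
  "hermitian_op X \<longleftrightarrow> (\<forall>a b. X b a = cnj (X a b))"

lemma density_op_hermitian: "density_op n m \<rho> \<Longrightarrow> hermitian_op \<rho>"
  using density_op_self_adjoint unfolding self_adjoint_def hermitian_op_def by blast

lemma hermitian_op_permute_op: "hermitian_op X \<Longrightarrow> hermitian_op (permute_op \<pi> X)"
  unfolding hermitian_op_def permute_op_def by blast

lemma hermitian_op_diff: "hermitian_op X \<Longrightarrow> hermitian_op Y \<Longrightarrow> hermitian_op (op_diff X Y)"
  unfolding hermitian_op_def op_diff_def by (metis complex_cnj_diff)

lemma hermitian_op_gossip:
  assumes "hermitian_op X"
  shows "hermitian_op (gossip \<alpha> e X)"
  unfolding hermitian_op_def
proof (intro allI)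
  fix a b
  have "X b a = cnj (X a b)" "permute_op (edge_transp e) X b a = cnj (permute_op (edge_transp e) X a b)"
    using assms hermitian_op_permute_op[OF assms] unfolding hermitian_op_def by blast+
  then show "gossip \<alpha> e X b a = cnj (gossip \<alpha> e X a b)"
    unfolding gossip_def by simp
qed

lemma hermitian_op_traj: "hermitian_op \<rho>0 \<Longrightarrow> hermitian_op (traj \<alpha> es \<rho>0 t)"
  by (induction t) (auto intro: hermitian_op_gossip)

lemma hermitian_op_sym_avg:
  assumes "hermitian_op X"
  shows "hermitian_op (sym_avg m X)"
  unfolding hermitian_op_def
proof (intro allI)
  fix a b
  have "permute_op \<pi> X b a = cnj (permute_op \<pi> X a b)" for \<pi>
    using hermitian_op_permute_op[OF assms] unfolding hermitian_op_def by blast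
  then have "(\<Sum>\<pi>\<in>site_perms m. permute_op \<pi> X b a) = cnj (\<Sum>\<pi>\<in>site_perms m. permute_op \<pi> X a b)"
    unfolding cnj_sum by (intro sum.cong refl)
  then show "sym_avg m X b a = cnj (sym_avg m X a b)"
    unfolding sym_avg_def by simp
qed

lemma trace_mult_self_hermitian:
  assumes "hermitian_op D"
  shows "Re (trace_mult n m D D) = hs_norm_sq n m D"
proof -
  have "D a c * D c a = complex_of_real ((cmod (D a c))\<^sup>2)" for a c
  proof -
    have "D c a = cnj (D a c)" using assms unfolding hermitian_op_def by blast
    then show ?thesis by (subst \<open>D c a = cnj (D a c)\<close>) (rule complex_norm_square[symmetric])
  qed
  then show ?thesis
    unfolding trace_mult_eq hs_norm_sq_def by (simp add: Re_sum)
qed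

lemma traj_cong: "(\<And>s. s < T \<Longrightarrow> es s = es' s) \<Longrightarrow> traj \<alpha> es \<rho>0 T = traj \<alpha> es' \<rho>0 T"
  by (induction T) auto

abbreviation iid_schedule :: "'e pmf \<Rightarrow> nat \<Rightarrow> (nat \<Rightarrow> 'e) pmf" where
  "iid_schedule Q T \<equiv> Pi_pmf {..<T} undefined (\<lambda>_. Q)"

lemma set_pmf_iid_schedule_apply:
  "es \<in> set_pmf (iid_schedule Q T) \<Longrightarrow> s < T \<Longrightarrow> es s \<in> set_pmf Q"
  using set_Pi_pmf[of "{..<T}" undefined "\<lambda>_. Q"] unfolding PiE_dflt_def by auto

lemma finite_set_pmf_iid_schedule:
  "finite (set_pmf Q) \<Longrightarrow> finite (set_pmf (iid_schedule Q T))"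
  by (subst set_Pi_pmf) auto

lemma expectation_iid_schedule_Suc:
  fixes f :: "(nat \<Rightarrow> 'e) \<Rightarrow> real"
  assumes fin: "finite (set_pmf Q)"
  shows "measure_pmf.expectation (iid_schedule Q (Suc T)) f
    = measure_pmf.expectation (iid_schedule Q T) (\<lambda>es. \<Sum>y\<in>set_pmf Q. pmf Q y * f (es(T := y)))"
proof -
  define S where "S = set_pmf (iid_schedule Q T)"
  have finS: "finite S" unfolding S_def by (rule finite_set_pmf_iid_schedule[OF fin])
  have "iid_schedule Q (Suc T) = map_pmf (\<lambda>(y, es). es(T := y)) (pair_pmf Q (iid_schedule Q T))"
    unfolding lessThan_Suc by (rule Pi_pmf_insert) auto
  then have "measure_pmf.expectation (iid_schedule Q (Suc T)) f
      = measure_pmf.expectation (pair_pmf Q (iid_schedule Q T)) (\<lambda>x. f ((snd x)(T := fst x)))"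
    by (simp add: case_prod_beta)
  also have "\<dots> = (\<Sum>x\<in>set_pmf Q \<times> S. f ((snd x)(T := fst x)) * pmf (pair_pmf Q (iid_schedule Q T)) x)"
    by (rule integral_measure_pmf_real) (use fin finS in \<open>auto simp: S_def\<close>)
  also have "\<dots> = (\<Sum>y\<in>set_pmf Q. \<Sum>es\<in>S. f (es(T := y)) * pmf (pair_pmf Q (iid_schedule Q T)) (y, es))"
    unfolding sum.cartesian_product by (simp add: case_prod_beta)
  also have "\<dots> = (\<Sum>y\<in>set_pmf Q. \<Sum>es\<in>S. pmf (iid_schedule Q T) es * (pmf Q y * f (es(T := y))))"
    by (intro sum.cong refl) (simp add: pmf_pair)
  also have "\<dots> = (\<Sum>es\<in>S. (\<Sum>y\<in>set_pmf Q. pmf Q y * f (es(T := y))) * pmf (iid_schedule Q T) es)"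
    by (subst sum.swap) (simp add: sum_distrib_left mult.commute)
  also have "\<dots> = measure_pmf.expectation (iid_schedule Q T) (\<lambda>es. \<Sum>y\<in>set_pmf Q. pmf Q y * f (es(T := y)))"
    by (rule integral_measure_pmf_real[symmetric]) (use finS in \<open>auto simp: S_def\<close>)
  finally show ?thesis .
qed

lemma expected_deviation_decay:
  assumes conn: "connected_graph m E" and Q: "set_pmf Q = E" and r: "0 \<le> r"
    and contr: "\<forall>X. sym_avg m X = (\<lambda>a b. 0) \<longrightarrow>
      (\<Sum>e\<in>E. pmf Q e * hs_norm_sq n m (gossip \<alpha> e X)) \<le> r * hs_norm_sq n m X"
  shows "measure_pmf.expectation (iid_schedule Q T) (\<lambda>es. hs_norm_sq n m (op_diff (traj \<alpha> es \<rho>0 T) (sym_avg m \<rho>0)))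
     \<le> r ^ T * hs_norm_sq n m (op_diff \<rho>0 (sym_avg m \<rho>0))"
proof (induction T)
  case (Suc T)
  have finE: "finite E" by (rule connected_graph_finite[OF conn])
  define X where "X es = op_diff (traj \<alpha> es \<rho>0 T) (sym_avg m \<rho>0)" for es
  have step: "op_diff (traj \<alpha> (es(T := y)) \<rho>0 (Suc T)) (sym_avg m \<rho>0) = gossip \<alpha> y (X es)"
    if "y \<in> E" for es y
  proof -
    have "traj \<alpha> (es(T := y)) \<rho>0 T = traj \<alpha> es \<rho>0 T" by (rule traj_cong) simp
    then show ?thesis
      using traj_deviation_Suc[of "es(T := y)" T m \<alpha> \<rho>0] connected_graph_edge_less[OF conn that]
      unfolding X_def by simp
  qed
  have sym: "sym_avg m (X es) = (\<lambda>a b. 0)" if "es \<in> set_pmf (iid_schedule Q T)" for es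
  proof -
    have "fst (es s) < m \<and> snd (es s) < m" if "s < T" for s
      using set_pmf_iid_schedule_apply[OF \<open>es \<in> _\<close> that] Q connected_graph_edge_less[OF conn] by auto
    then have "sym_avg m (traj \<alpha> es \<rho>0 T) = sym_avg m \<rho>0"
      by (induction T) (auto simp: sym_avg_gossip)
    then show ?thesis unfolding X_def by (rule sym_avg_diff_sym_avg)
  qed
  have fin: "finite (set_pmf (iid_schedule Q T))"
    using finite_set_pmf_iid_schedule[of Q T] finE Q by simp
  have "measure_pmf.expectation (iid_schedule Q (Suc T))
        (\<lambda>es. hs_norm_sq n m (op_diff (traj \<alpha> es \<rho>0 (Suc T)) (sym_avg m \<rho>0)))
      = measure_pmf.expectation (iid_schedule Q T) (\<lambda>es. \<Sum>y\<in>E. pmf Q y * hs_norm_sq n m (gossip \<alpha> y (X es)))"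
    using expectation_iid_schedule_Suc[where Q=Q and T=T] finE Q step by (simp del: traj.simps)
  also have "\<dots> \<le> measure_pmf.expectation (iid_schedule Q T) (\<lambda>es. r * hs_norm_sq n m (X es))"
    using contr sym fin
    by (intro integral_mono_AE) (auto simp: integrable_measure_pmf_finite AE_measure_pmf_iff)
  also have "\<dots> \<le> r * (r ^ T * hs_norm_sq n m (op_diff \<rho>0 (sym_avg m \<rho>0)))"
    using Suc r unfolding X_def by (simp add: mult_left_mono)
  finally show ?case by simp
qed simp

lemma trace_mult_traj_deviation_sq:
  assumes "density_op n m \<rho>0"
  shows "Re (trace_mult n m (\<lambda>a b. traj \<alpha> es \<rho>0 T a b - sym_avg m \<rho>0 a b)
      (\<lambda>a b. traj \<alpha> es \<rho>0 T a b - sym_avg m \<rho>0 a b))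
    = hs_norm_sq n m (op_diff (traj \<alpha> es \<rho>0 T) (sym_avg m \<rho>0))"
proof -
  have "hermitian_op \<rho>0" by (rule density_op_hermitian[OF assms])
  then have "hermitian_op (op_diff (traj \<alpha> es \<rho>0 T) (sym_avg m \<rho>0))"
    by (intro hermitian_op_diff hermitian_op_traj hermitian_op_sym_avg)
  then show ?thesis
    using trace_mult_self_hermitian unfolding op_diff_def by blast
qed

lemma iid_schedule_deviation_small:
  assumes conn: "connected_graph m E" and \<alpha>: "0 < \<alpha>" "\<alpha> < 1" and Q: "set_pmf Q = E"
    and \<rho>0: "density_op n m \<rho>0" and \<delta>: "\<delta> > 0" and \<epsilon>: "\<epsilon> > 0"
  shows "\<exists>T>0. measure_pmf.prob (iid_schedule Q T)
      {es. Re (trace_mult n m (\<lambda>a b. traj \<alpha> es \<rho>0 T a b - sym_avg m \<rho>0 a b)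
                              (\<lambda>a b. traj \<alpha> es \<rho>0 T a b - sym_avg m \<rho>0 a b)) > \<epsilon>} < \<delta>"
proof -
  obtain r where r: "0 \<le> r" "r < 1" and contr: "\<forall>X. sym_avg m X = (\<lambda>a b. 0) \<longrightarrow>
      (\<Sum>e\<in>E. pmf Q e * hs_norm_sq n m (gossip \<alpha> e X)) \<le> r * hs_norm_sq n m X"
    using expected_gossip_contraction[OF conn \<alpha> Q, where n=n] by blast
  define N0 where "N0 = hs_norm_sq n m (op_diff \<rho>0 (sym_avg m \<rho>0))"
  define F where "F T es = hs_norm_sq n m (op_diff (traj \<alpha> es \<rho>0 T) (sym_avg m \<rho>0))" for T es
  have F_eq: "Re (trace_mult n m (\<lambda>a b. traj \<alpha> es \<rho>0 T a b - sym_avg m \<rho>0 a b)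
      (\<lambda>a b. traj \<alpha> es \<rho>0 T a b - sym_avg m \<rho>0 a b)) = F T es" for T es
    unfolding F_def by (rule trace_mult_traj_deviation_sq[OF \<rho>0])
  have fin: "finite (set_pmf (iid_schedule Q T))" for T
    using finite_set_pmf_iid_schedule[of Q T] connected_graph_finite[OF conn] Q by simp
  have markov: "measure_pmf.prob (iid_schedule Q T) {es. F T es > \<epsilon>} \<le> r ^ T * N0 / \<epsilon>" for T
  proof -
    have "measure_pmf.prob (iid_schedule Q T) {es. F T es > \<epsilon>}
        \<le> measure_pmf.prob (iid_schedule Q T) {x \<in> space (iid_schedule Q T). \<epsilon> \<le> F T x}"
      by (intro measure_pmf.finite_measure_mono) auto
    also have "\<dots> \<le> measure_pmf.expectation (iid_schedule Q T) (F T) / \<epsilon>"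
      by (rule integral_Markov_inequality_measure[where A=UNIV])
         (use \<epsilon> fin in \<open>auto simp: F_def hs_norm_sq_nonneg integrable_measure_pmf_finite\<close>)
    also have "\<dots> \<le> r ^ T * N0 / \<epsilon>"
      using expected_deviation_decay[OF conn Q r(1) contr] \<epsilon>
      unfolding F_def N0_def by (simp add: divide_right_mono)
    finally show ?thesis .
  qed
  have "(\<lambda>T. r ^ T * N0 / \<epsilon>) \<longlonglongrightarrow> 0 * N0 / \<epsilon>"
    by (intro tendsto_intros LIMSEQ_power_zero) (use r \<epsilon> in auto)
  then have "\<forall>\<^sub>F T in sequentially. r ^ T * N0 / \<epsilon> < \<delta>"
    using \<delta> by (intro order_tendstoD(2)) auto
  then obtain T0 where T0: "\<And>T. T \<ge> T0 \<Longrightarrow> r ^ T * N0 / \<epsilon> < \<delta>"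
    unfolding eventually_sequentially by blast
  have "measure_pmf.prob (iid_schedule Q (Suc T0)) {es. F (Suc T0) es > \<epsilon>} < \<delta>"
    using markov[of "Suc T0"] T0[of "Suc T0"] by simp
  then show ?thesis unfolding F_eq by (intro exI[of _ "Suc T0"]) simp
qed

section \<open>Average consensus\<close>

definition perm_invariant :: "nat \<Rightarrow> op \<Rightarrow> bool" where
  "perm_invariant m A \<longleftrightarrow> (\<forall>\<pi>. \<pi> permutes {0..<m} \<longrightarrow> permute_op \<pi> A = A)"

lemma perm_invariant_sym_avg: "perm_invariant m (sym_avg m \<rho>)"
  unfolding perm_invariant_def using permute_op_sym_avg by blast

lemma trace_mult_permute_op:
  assumes \<pi>: "\<pi> permutes {0..<m}"
  shows "trace_mult n m A (permute_op \<pi> B) = trace_mult n m (permute_op (inv \<pi>) A) B"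
proof -
  note reindex = sum_Idx_comp_permutes[OF permutes_inv[OF \<pi>]]
  have inv_comp: "x \<circ> inv \<pi> \<circ> \<pi> = x" for x :: idx
    using permutes_inv_o(2)[OF \<pi>] by (simp add: o_assoc[symmetric])
  define g where "g x y = A (x \<circ> \<pi>) (y \<circ> \<pi>) * B y x" for x y
  have "trace_mult n m A (permute_op \<pi> B) = (\<Sum>a\<in>Idx n m. \<Sum>c\<in>Idx n m. g (a \<circ> inv \<pi>) (c \<circ> inv \<pi>))"
    unfolding trace_mult_eq g_def permute_op_def inv_comp ..
  also have "\<dots> = (\<Sum>a\<in>Idx n m. \<Sum>c\<in>Idx n m. g (a \<circ> inv \<pi>) c)"
    by (intro sum.cong refl reindex)
  also have "\<dots> = (\<Sum>a\<in>Idx n m. \<Sum>c\<in>Idx n m. g a c)"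
    by (rule reindex[where f="\<lambda>a. \<Sum>c\<in>Idx n m. g a c"])
  also have "\<dots> = trace_mult n m (permute_op (inv \<pi>) A) B"
    unfolding trace_mult_eq g_def permute_op_def permutes_inv_inv[OF \<pi>] ..
  finally show ?thesis .
qed

lemma trace_mult_permute_op_invariant:
  assumes "perm_invariant m A" "\<pi> permutes {0..<m}"
  shows "trace_mult n m A (permute_op \<pi> B) = trace_mult n m A B"
  using trace_mult_permute_op[OF assms(2)] assms(1) permutes_inv[OF assms(2)]
  unfolding perm_invariant_def by metis

lemma trace_mult_sum:
  "trace_mult n m A (\<lambda>a b. \<Sum>i\<in>I. c i * B i a b) = (\<Sum>i\<in>I. c i * trace_mult n m A (B i))"
  unfolding trace_mult_eq by (simp add: sum_distrib_left sum.swap[of _ I] algebra_simps)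

lemma trace_mult_gossip:
  assumes "perm_invariant m A" "fst e < m" "snd e < m"
  shows "trace_mult n m A (gossip \<alpha> e B) = trace_mult n m A B"
proof -
  have "trace_mult n m A (gossip \<alpha> e B) = complex_of_real (1 - \<alpha>) * trace_mult n m A B
      + complex_of_real \<alpha> * trace_mult n m A (permute_op (edge_transp e) B)"
    unfolding trace_mult_eq gossip_def
    by (simp add: ring_distribs sum.distrib sum_distrib_left mult.left_commute)
  also have "trace_mult n m A (permute_op (edge_transp e) B) = trace_mult n m A B"
    by (rule trace_mult_permute_op_invariant[OF assms(1) edge_transp_permutes[OF assms(2,3)]])
  finally show ?thesis by (simp add: algebra_simps flip: distrib_right of_real_add)
qed

lemma trace_mult_traj:
  assumes "perm_invariant m A" "\<And>t. fst (es t) < m \<and> snd (es t) < m"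
  shows "trace_mult n m A (traj \<alpha> es \<rho>0 t) = trace_mult n m A \<rho>0"
  by (induction t) (use assms trace_mult_gossip in auto)

lemma trace_mult_exp_traj:
  assumes A: "perm_invariant m A" and conn: "connected_graph m E" and Q: "set_pmf Q = E"
  shows "trace_mult n m A (exp_traj \<alpha> Q E \<rho>0 t) = trace_mult n m A \<rho>0"
proof (induction t)
  case (Suc t)
  have "trace_mult n m A (exp_traj \<alpha> Q E \<rho>0 (Suc t))
      = (\<Sum>e\<in>E. complex_of_real (pmf Q e) * trace_mult n m A (gossip \<alpha> e (exp_traj \<alpha> Q E \<rho>0 t)))"
    by (simp add: trace_mult_sum)
  also have "\<dots> = (\<Sum>e\<in>E. complex_of_real (pmf Q e) * trace_mult n m A \<rho>0)"
    using trace_mult_gossip[OF A] connected_graph_edge_less[OF conn] Suc by (intro sum.cong) auto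
  also have "\<dots> = trace_mult n m A \<rho>0"
    using sum_pmf_set_pmf[OF Q connected_graph_finite[OF conn]] by (simp flip: sum_distrib_right of_real_sum)
  finally show ?case .
qed simp

lemma trace_mult_sym_avg:
  assumes "perm_invariant m A"
  shows "trace_mult n m A (sym_avg m \<rho>) = trace_mult n m A \<rho>"
proof -
  have "trace_mult n m A (sym_avg m \<rho>)
      = (\<Sum>\<pi>\<in>site_perms m. complex_of_real (1 / fact m) * trace_mult n m A (permute_op \<pi> \<rho>))"
    unfolding sym_avg_eq_convex_comb trace_mult_sum ..
  also have "\<dots> = (\<Sum>\<pi>\<in>site_perms m. complex_of_real (1 / fact m) * trace_mult n m A \<rho>)"
    using trace_mult_permute_op_invariant[OF assms] by (intro sum.cong) auto
  also have "\<dots> = trace_mult n m A \<rho>" by simp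
  finally show ?thesis .
qed

lemma converges_to_entry:
  assumes "converges_to n m F \<sigma>" "c \<in> Idx n m" "a \<in> Idx n m"
  shows "(\<lambda>t. F t c a) \<longlonglongrightarrow> \<sigma> c a"
proof -
  have le: "cmod (F t c a - \<sigma> c a) \<le> hs_norm n m (\<lambda>a b. F t a b - \<sigma> a b)" for t
  proof -
    have "(cmod (F t c a - \<sigma> c a))\<^sup>2 \<le> (\<Sum>b\<in>Idx n m. (cmod (F t c b - \<sigma> c b))\<^sup>2)"
      using assms(3) by (intro member_le_sum) auto
    also have "\<dots> \<le> (\<Sum>x\<in>Idx n m. \<Sum>b\<in>Idx n m. (cmod (F t x b - \<sigma> x b))\<^sup>2)"
      using assms(2)
      by (intro member_le_sum[of c "Idx n m" "\<lambda>x. \<Sum>b\<in>Idx n m. (cmod (F t x b - \<sigma> x b))\<^sup>2"] sum_nonneg) auto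
    finally show ?thesis unfolding hs_norm_def by (simp add: real_le_rsqrt)
  qed
  have "(\<lambda>t. F t c a - \<sigma> c a) \<longlonglongrightarrow> 0"
    by (rule Lim_null_comparison[OF always_eventually[OF allI[OF le]]])
       (use assms(1) in \<open>simp add: converges_to_def\<close>)
  from tendsto_add[OF this tendsto_const[of "\<sigma> c a"]] show ?thesis by simp
qed

lemma trace_mult_tendsto:
  assumes "converges_to n m F \<sigma>"
  shows "(\<lambda>t. trace_mult n m A (F t)) \<longlonglongrightarrow> trace_mult n m A \<sigma>"
  unfolding trace_mult_eq by (intro tendsto_sum tendsto_mult_left converges_to_entry[OF assms])

definition local_average :: "nat \<Rightarrow> nat \<Rightarrow> (nat \<Rightarrow> nat \<Rightarrow> complex) \<Rightarrow> op" where
  "local_average n m \<sigma> = (\<lambda>a b. (\<Sum>i<m. local_op n m i \<sigma> a b) / of_nat m)"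

lemma supported_local_average: "supported n m (local_average n m \<sigma>)"
  unfolding supported_def local_average_def local_op_def by auto

lemma permute_op_local_op:
  assumes \<pi>: "\<pi> permutes {0..<m}" and i: "i < m"
  shows "permute_op \<pi> (local_op n m i \<sigma>) = local_op n m (inv \<pi> i) \<sigma>"
proof (intro ext)
  fix a b :: idx
  have "bij_betw (inv \<pi>) {0..<m} {0..<m}" by (rule permutes_imp_bij[OF permutes_inv[OF \<pi>]])
  then have bij: "bij_betw (inv \<pi>) ({0..<m} - {i}) ({0..<m} - {inv \<pi> i})"
    by (rule bij_betw_DiffI) (use i permutes_in_image[OF permutes_inv[OF \<pi>]] in auto)
  have "(\<Prod>l\<in>{0..<m} - {i}. if a (inv \<pi> l) = b (inv \<pi> l) then 1 else 0)
      = (\<Prod>l\<in>{0..<m} - {inv \<pi> i}. if a l = b l then (1::complex) else 0)"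
    using prod.reindex_bij_betw[OF bij, of "\<lambda>l. if a l = b l then (1::complex) else 0"] by simp
  then show "permute_op \<pi> (local_op n m i \<sigma>) a b = local_op n m (inv \<pi> i) \<sigma> a b"
    unfolding permute_op_def local_op_def Idx_comp_permutes_iff[OF permutes_inv[OF \<pi>]] by simp
qed

lemma perm_invariant_local_average: "perm_invariant m (local_average n m \<sigma>)"
  unfolding perm_invariant_def
proof (intro allI impI ext)
  fix \<pi> a b assume \<pi>: "\<pi> permutes {0..<m}"
  have bij: "bij_betw (inv \<pi>) {..<m} {..<m}"
    using permutes_imp_bij[OF permutes_inv[OF \<pi>]] by (simp add: atLeast0LessThan)
  have "(\<Sum>i<m. permute_op \<pi> (local_op n m i \<sigma>) a b) = (\<Sum>i<m. local_op n m (inv \<pi> i) \<sigma> a b)"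
    using permute_op_local_op[OF \<pi>] by (intro sum.cong) auto
  also have "\<dots> = (\<Sum>i<m. local_op n m i \<sigma> a b)"
    using sum.reindex_bij_betw[OF bij, of "\<lambda>i. local_op n m i \<sigma> a b"] by simp
  finally show "permute_op \<pi> (local_average n m \<sigma>) a b = local_average n m \<sigma> a b"
    unfolding local_average_def by (simp add: permute_op_def)
qed

lemma trace_mult_local_op_invariant:
  assumes R: "perm_invariant m R" and l: "l < m" "l' < m"
  shows "trace_mult n m (local_op n m l \<sigma>) R = trace_mult n m (local_op n m l' \<sigma>) R"
proof -
  define \<tau> where "\<tau> = Transposition.transpose l l'"
  have \<tau>: "\<tau> permutes {0..<m}" unfolding \<tau>_def using l by (intro permutes_swap_id) auto
  have "trace_mult n m (local_op n m l \<sigma>) R = trace_mult n m (local_op n m l \<sigma>) (permute_op \<tau> R)"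
    using R \<tau> unfolding perm_invariant_def by simp
  also have "\<dots> = trace_mult n m (local_op n m (inv (inv \<tau>) l) \<sigma>) R"
    unfolding trace_mult_permute_op[OF \<tau>] permute_op_local_op[OF permutes_inv[OF \<tau>] l(1)] ..
  also have "inv (inv \<tau>) l = l'" unfolding permutes_inv_inv[OF \<tau>] \<tau>_def by simp
  finally show ?thesis .
qed

lemma trace_mult_local_average:
  assumes R: "perm_invariant m R" and l: "l < m"
  shows "trace_mult n m (local_average n m \<sigma>) R = trace_mult n m (local_op n m l \<sigma>) R"
proof -
  have "trace_mult n m (local_average n m \<sigma>) R = (\<Sum>i<m. trace_mult n m (local_op n m i \<sigma>) R) / of_nat m"
    unfolding trace_mult_eq local_average_def
    by (simp add: sum_divide_distrib sum_distrib_right sum.swap[of _ "{..<m}"])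
  also have "\<dots> = (\<Sum>i<m. trace_mult n m (local_op n m l \<sigma>) R) / of_nat m"
    using trace_mult_local_op_invariant[OF R _ l] by (intro arg_cong2[where f="(/)"] sum.cong) auto
  also have "\<dots> = trace_mult n m (local_op n m l \<sigma>) R" using l by simp
  finally show ?thesis .
qed

definition two_point_vec :: "complex \<Rightarrow> complex \<Rightarrow> idx \<Rightarrow> idx \<Rightarrow> idx \<Rightarrow> complex" where
  "two_point_vec u w a b = (\<lambda>c. (if c = a then u else 0) + (if c = b then w else 0))"

definition pure_state :: "nat \<Rightarrow> nat \<Rightarrow> complex \<Rightarrow> complex \<Rightarrow> idx \<Rightarrow> idx \<Rightarrow> op" where
  "pure_state n m u w a b = (\<lambda>x y. if x \<in> Idx n m \<and> y \<in> Idx n m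
      then two_point_vec u w a b x * cnj (two_point_vec u w a b y) else 0)"

lemma sum_mult_two_point_vec:
  assumes "a \<in> Idx n m" "b \<in> Idx n m" "a \<noteq> b"
  shows "(\<Sum>c\<in>Idx n m. f c * two_point_vec u w a b c) = f a * u + f b * w"
proof -
  have "(\<Sum>c\<in>Idx n m. f c * two_point_vec u w a b c)
      = (\<Sum>c\<in>Idx n m. (if c = a then f c * u else 0) + (if c = b then f c * w else 0))"
    unfolding two_point_vec_def by (intro sum.cong refl) (auto simp: distrib_left)
  also have "\<dots> = (\<Sum>c\<in>Idx n m. if c = a then f c * u else 0) + (\<Sum>c\<in>Idx n m. if c = b then f c * w else 0)"
    by (rule sum.distrib)
  also have "\<dots> = f a * u + f b * w" using assms by (simp add: sum.delta)
  finally show ?thesis .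
qed

lemma density_op_pure_state:
  assumes ab: "a \<in> Idx n m" "b \<in> Idx n m" "a \<noteq> b" and uw: "(cmod u)\<^sup>2 + (cmod w)\<^sup>2 = 1"
  shows "density_op n m (pure_state n m u w a b)"
proof (rule density_opI)
  show "self_adjoint n m (pure_state n m u w a b)"
    unfolding self_adjoint_def supported_def pure_state_def by (auto simp: mult.commute)
  have "op_trace n m (pure_state n m u w a b)
      = (\<Sum>c\<in>Idx n m. cnj (two_point_vec u w a b c) * two_point_vec u w a b c)"
    unfolding op_trace_def pure_state_def by (simp add: mult.commute)
  also have "\<dots> = cnj u * u + cnj w * w"
    using ab by (simp add: sum_mult_two_point_vec) (simp add: two_point_vec_def)
  also have "\<dots> = complex_of_real ((cmod u)\<^sup>2 + (cmod w)\<^sup>2)"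
    unfolding of_real_add complex_norm_square by (simp add: mult.commute)
  finally show "op_trace n m (pure_state n m u w a b) = 1" using uw by simp
  fix v :: "idx \<Rightarrow> complex"
  define z where "z = (\<Sum>x\<in>Idx n m. cnj (v x) * two_point_vec u w a b x)"
  have "(\<Sum>x\<in>Idx n m. \<Sum>y\<in>Idx n m. cnj (v x) * pure_state n m u w a b x y * v y)
      = (\<Sum>x\<in>Idx n m. \<Sum>y\<in>Idx n m.
          (cnj (v x) * two_point_vec u w a b x) * cnj (cnj (v y) * two_point_vec u w a b y))"
    unfolding pure_state_def by (intro sum.cong refl) (simp add: algebra_simps)
  also have "\<dots> = z * cnj z"
    unfolding z_def cnj_sum sum_product ..
  also have "\<dots> = complex_of_real ((cmod z)\<^sup>2)" by (rule complex_norm_square[symmetric])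
  finally show "Im (\<Sum>x\<in>Idx n m. \<Sum>y\<in>Idx n m. cnj (v x) * pure_state n m u w a b x y * v y) = 0 \<and>
      0 \<le> Re (\<Sum>x\<in>Idx n m. \<Sum>y\<in>Idx n m. cnj (v x) * pure_state n m u w a b x y * v y)"
    by simp
qed

lemma trace_mult_pure_state:
  assumes ab: "a \<in> Idx n m" "b \<in> Idx n m" "a \<noteq> b"
  shows "trace_mult n m A (pure_state n m u w a b)
           = cnj u * (A a a * u + A a b * w) + cnj w * (A b a * u + A b b * w)"
proof -
  have cnj_vec: "cnj (two_point_vec u w a b c) = two_point_vec (cnj u) (cnj w) a b c" for c
    unfolding two_point_vec_def by simp
  have "trace_mult n m A (pure_state n m u w a b) = (\<Sum>x\<in>Idx n m.
      (\<Sum>c\<in>Idx n m. A x c * two_point_vec u w a b c) * two_point_vec (cnj u) (cnj w) a b x)"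
    unfolding trace_mult_eq pure_state_def cnj_vec by (simp add: sum_distrib_right mult.assoc)
  also have "\<dots> = (A a a * u + A a b * w) * cnj u + (A b a * u + A b b * w) * cnj w"
    using ab by (simp add: sum_mult_two_point_vec)
  finally show ?thesis by (simp add: mult.commute)
qed

lemma Idx_exists_other:
  assumes "a \<in> Idx n m" "n \<ge> 2" "m \<ge> 1"
  obtains b where "b \<in> Idx n m" "b \<noteq> a"
proof
  define b where "b = a(0 := (if a 0 = 0 then 1 else 0))"
  show "b \<in> Idx n m" using assms unfolding b_def Idx_def by (auto simp: PiE_iff extensional_def)
  show "b \<noteq> a" unfolding b_def by (metis fun_upd_same zero_neq_one)
qed

text \<open>The amplitudes \<open>3/5\<close> and \<open>4/5\<close> give normalized states without square roots.\<close>

lemma supported_eq_zero_if_trace_mult_density_zero: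
  assumes D: "supported n m D" and n: "n \<ge> 2" and m: "m \<ge> 1"
    and zero: "\<And>\<rho>. density_op n m \<rho> \<Longrightarrow> trace_mult n m D \<rho> = 0"
  shows "D = (\<lambda>a b. 0)"
proof (intro ext)
  fix a b
  have diag: "D x x = 0" if x: "x \<in> Idx n m" for x
  proof -
    obtain y where y: "y \<in> Idx n m" "y \<noteq> x" using Idx_exists_other[OF x n m] by blast
    from zero[OF density_op_pure_state[OF x y(1) y(2)[symmetric], of 1 0]]
    show ?thesis unfolding trace_mult_pure_state[OF x y(1) y(2)[symmetric]] by simp
  qed
  show "D a b = 0"
  proof (cases "a \<in> Idx n m \<and> b \<in> Idx n m \<and> a \<noteq> b")
    case False
    then show ?thesis using D diag unfolding supported_def by auto
  next
    case True
    then have ab: "a \<in> Idx n m" "b \<in> Idx n m" "a \<noteq> b" by auto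
    have cnj: "cnj (3/5::complex) = 3/5" "cnj (4/5::complex) = 4/5" "cnj (4/5 * \<i>) = - (4/5) * \<i>"
      by (simp_all add: complex_eq_iff)
    have norm1: "(cmod (3/5::complex))\<^sup>2 + (cmod (4/5::complex))\<^sup>2 = 1"
      and norm2: "(cmod (3/5::complex))\<^sup>2 + (cmod (4/5 * \<i>::complex))\<^sup>2 = 1"
      by (simp_all add: norm_divide norm_mult power2_eq_square)
    have "D a b + D b a = 25 / 12 * trace_mult n m D (pure_state n m (3/5) (4/5) a b)"
      unfolding trace_mult_pure_state[OF ab] cnj using diag ab by (simp add: field_simps)
    then have sum: "D a b + D b a = 0" using zero[OF density_op_pure_state[OF ab norm1]] by simp
    have "D a b - D b a = 25 / (12 * \<i>) * trace_mult n m D (pure_state n m (3/5) (4/5 * \<i>) a b)"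
      unfolding trace_mult_pure_state[OF ab] cnj using diag ab by (simp add: field_simps)
    then have diff: "D a b - D b a = 0" using zero[OF density_op_pure_state[OF ab norm2]] by simp
    from sum diff show ?thesis by (simp add: algebra_simps)
  qed
qed

lemma trace_mult_op_diff:
  "trace_mult n m (op_diff A B) \<rho> = trace_mult n m A \<rho> - trace_mult n m B \<rho>"
  unfolding trace_mult_eq op_diff_def by (simp add: algebra_simps sum_subtractf)

lemma eq_local_average_if_tendsto:
  assumes n: "n \<ge> 2" and m: "m \<ge> 1" and S: "supported n m S"
    and conv: "\<And>\<rho>0. density_op n m \<rho>0 \<Longrightarrow> converges_to n m (F \<rho>0) (sym_avg m \<rho>0)"
    and lim: "\<And>\<rho>0. density_op n m \<rho>0 \<Longrightarrow>
      (\<lambda>t. trace_mult n m (local_op n m 0 \<sigma>) (F \<rho>0 t)) \<longlonglongrightarrow> trace_mult n m S \<rho>0"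
  shows "S = local_average n m \<sigma>"
proof -
  have "trace_mult n m S \<rho> = trace_mult n m (local_average n m \<sigma>) \<rho>" if \<rho>: "density_op n m \<rho>" for \<rho>
  proof -
    have "trace_mult n m S \<rho> = trace_mult n m (local_op n m 0 \<sigma>) (sym_avg m \<rho>)"
      using LIMSEQ_unique[OF lim[OF \<rho>] trace_mult_tendsto[OF conv[OF \<rho>]]] .
    also have "\<dots> = trace_mult n m (local_average n m \<sigma>) (sym_avg m \<rho>)"
      using trace_mult_local_average[OF perm_invariant_sym_avg, of 0 m] m by simp
    also have "\<dots> = trace_mult n m (local_average n m \<sigma>) \<rho>"
      by (rule trace_mult_sym_avg[OF perm_invariant_local_average])
    finally show ?thesis .
  qed
  then have "trace_mult n m (op_diff S (local_average n m \<sigma>)) \<rho> = 0" if "density_op n m \<rho>" for \<rho>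
    using that by (simp add: trace_mult_op_diff)
  moreover have "supported n m (op_diff S (local_average n m \<sigma>))"
    using S supported_local_average[of n m \<sigma>] unfolding supported_def op_diff_def by simp
  ultimately have "op_diff S (local_average n m \<sigma>) = (\<lambda>a b. 0)"
    by (intro supported_eq_zero_if_trace_mult_density_zero[OF _ n m])
  then show ?thesis by (simp add: op_diff_def fun_eq_iff)
qed

lemma achieves_S_avg_SSC_iff_local_average:
  fixes F :: "op \<Rightarrow> nat \<Rightarrow> op"
  assumes n: "n \<ge> 2" and m: "m \<ge> 2" and S: "self_adjoint n m S"
    and conv: "\<And>\<rho>0. density_op n m \<rho>0 \<Longrightarrow> converges_to n m (F \<rho>0) (sym_avg m \<rho>0)"
    and conserved: "\<And>A \<rho>0 t. perm_invariant m A \<Longrightarrow> trace_mult n m A (F \<rho>0 t) = trace_mult n m A \<rho>0"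
  shows "achieves_S_avg_SSC n m F S \<longleftrightarrow> is_local_average n m S"
proof
  assume "achieves_S_avg_SSC n m F S"
  then obtain \<sigma> where \<sigma>: "hermitian1 n \<sigma>" and lim: "\<And>\<rho>0 l. density_op n m \<rho>0 \<Longrightarrow> l < m \<Longrightarrow>
      (\<lambda>t. trace_mult n m (local_op n m l \<sigma>) (F \<rho>0 t)) \<longlonglongrightarrow> trace_mult n m S \<rho>0"
    unfolding achieves_S_avg_SSC_def by blast
  have "S = local_average n m \<sigma>"
    using S m lim[of _ 0] by (intro eq_local_average_if_tendsto[OF n _ _ conv]) (auto simp: self_adjoint_def)
  then show "is_local_average n m S"
    unfolding is_local_average_def local_average_def using \<sigma> by blast
next
  assume "is_local_average n m S"
  then obtain \<sigma> where \<sigma>: "hermitian1 n \<sigma>" and S_eq: "S = local_average n m \<sigma>"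
    unfolding is_local_average_def local_average_def by blast
  have "(\<lambda>t. trace_mult n m (local_op n m l \<sigma>) (F \<rho>0 t)) \<longlonglongrightarrow> trace_mult n m S \<rho>0 \<and>
        (\<lambda>t. trace_mult n m S (F \<rho>0 t)) \<longlonglongrightarrow> trace_mult n m S \<rho>0"
    if \<rho>0: "density_op n m \<rho>0" and l: "l < m" for \<rho>0 l
  proof
    have "trace_mult n m (local_op n m l \<sigma>) (sym_avg m \<rho>0) = trace_mult n m S \<rho>0"
      unfolding S_eq trace_mult_local_average[OF perm_invariant_sym_avg l, symmetric]
      by (rule trace_mult_sym_avg[OF perm_invariant_local_average])
    then show "(\<lambda>t. trace_mult n m (local_op n m l \<sigma>) (F \<rho>0 t)) \<longlonglongrightarrow> trace_mult n m S \<rho>0"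
      using trace_mult_tendsto[OF conv[OF \<rho>0], of "local_op n m l \<sigma>"] by simp
    show "(\<lambda>t. trace_mult n m S (F \<rho>0 t)) \<longlonglongrightarrow> trace_mult n m S \<rho>0"
      unfolding S_eq conserved[OF perm_invariant_local_average] by simp
  qed
  moreover have "achieves_SSC n m F"
    by (rule achieves_SSC_if_converges_to_sym_avg[OF conv])
  ultimately show "achieves_S_avg_SSC n m F S"
    unfolding achieves_S_avg_SSC_def using \<sigma> by blast
qed

theorem theorem2:
  fixes n m :: nat and E :: "(nat \<times> nat) set" and \<alpha> :: real and Q :: "(nat \<times> nat) pmf"
  assumes "n \<ge> 2" and "m \<ge> 2" and "connected_graph m E"
    and "0 < \<alpha>" and "\<alpha> < 1"
    and "set_pmf Q = E"
  shows
    "(\<forall>es. periodic_schedule E es \<longrightarrow>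
        (\<forall>\<rho>0. density_op n m \<rho>0 \<longrightarrow>
           converges_to n m (traj \<alpha> es \<rho>0) (sym_avg m \<rho>0) \<and> sym_avg m \<rho>0 \<in> SSC n m)
        \<and> achieves_SSC n m (traj \<alpha> es))
   \<and> ((\<forall>\<rho>0. density_op n m \<rho>0 \<longrightarrow>
           converges_to n m (exp_traj \<alpha> Q E \<rho>0) (sym_avg m \<rho>0) \<and> sym_avg m \<rho>0 \<in> SSC n m)
        \<and> achieves_SSC n m (exp_traj \<alpha> Q E))
   \<and> (\<forall>\<rho>0. density_op n m \<rho>0 \<longrightarrow> sym_avg m \<rho>0 \<in> SSC n m \<and>
        (\<forall>\<delta>>0. \<forall>\<epsilon>>0. \<exists>T>0.
           measure_pmf.prob (Pi_pmf {..<T} undefined (\<lambda>_. Q))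
             {es. Re (op_trace n m (op_mult n m (\<lambda>a b. traj \<alpha> es \<rho>0 T a b - sym_avg m \<rho>0 a b)
                                              (\<lambda>a b. traj \<alpha> es \<rho>0 T a b - sym_avg m \<rho>0 a b))) > \<epsilon>}
           < \<delta>))
   \<and> (\<forall>S. self_adjoint n m S \<longrightarrow>
        (\<forall>es. periodic_schedule E es \<longrightarrow>
           (achieves_S_avg_SSC n m (traj \<alpha> es) S \<longleftrightarrow> is_local_average n m S))
        \<and> (achieves_S_avg_SSC n m (exp_traj \<alpha> Q E) S \<longleftrightarrow> is_local_average n m S))"
proof -
  note conn = assms(3) and \<alpha> = assms(4,5) and Q = assms(6)
  have edges: "fst (es t) < m \<and> snd (es t) < m" if "periodic_schedule E es" for es t
    using that connected_graph_edge_less[OF conn] unfolding periodic_schedule_def by blast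
  have periodic: "converges_to n m (traj \<alpha> es \<rho>0) (sym_avg m \<rho>0)" if "periodic_schedule E es" for es \<rho>0
    by (rule periodic_schedule_converges_to_sym_avg[OF conn \<alpha> that])
  have expected: "converges_to n m (exp_traj \<alpha> Q E \<rho>0) (sym_avg m \<rho>0)" for \<rho>0
    by (rule expected_state_converges_to_sym_avg[OF conn \<alpha> Q])
  have ach_periodic: "achieves_SSC n m (traj \<alpha> es)" if "periodic_schedule E es" for es
    by (rule achieves_SSC_if_converges_to_sym_avg[OF periodic[OF that]])
  have ach_expected: "achieves_SSC n m (exp_traj \<alpha> Q E)"
    by (rule achieves_SSC_if_converges_to_sym_avg[OF expected])
  have avg_periodic: "achieves_S_avg_SSC n m (traj \<alpha> es) S \<longleftrightarrow> is_local_average n m S"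
    if "self_adjoint n m S" "periodic_schedule E es" for S es
    using assms(1,2) that(1) periodic[OF that(2)] trace_mult_traj[OF _ edges[OF that(2)]]
    by (rule achieves_S_avg_SSC_iff_local_average)
  have avg_expected: "achieves_S_avg_SSC n m (exp_traj \<alpha> Q E) S \<longleftrightarrow> is_local_average n m S"
    if "self_adjoint n m S" for S
    using assms(1,2) that expected trace_mult_exp_traj[OF _ conn Q]
    by (rule achieves_S_avg_SSC_iff_local_average)
  show ?thesis
    by (auto simp: periodic ach_periodic expected ach_expected sym_avg_in_SSC avg_periodic avg_expected
        intro: iid_schedule_deviation_small[OF conn \<alpha> Q])
qed

end
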